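(* Let $G=(V,E)$ be a finite connected graph with root $O$, and consider the deterministic search game $\langle G,O,\mathbf 1\rangle$. Then $\mathrm{val}(\mathbf 1)\le |E|$. Moreover, $\mathrm{val}(\mathbf 1)=|E|$ if and only if $G$ is a tree. When $G$ is a tree, the equal branching density (for the hider) and the uniform Chinese postman strategy (for the searcher) are optimal strategies.
   Context: Deterministic search game $\langle G,O,\mathbf 1\rangle$: this is a zero-sum game between a hider (the maximizer) and a searcher (the minimizer) played on a finite connected undirected graph $G=(V,E)$ with unit-length edges and a distinguished root $O$. The hider chooses an edge $e\in E$ and stays there forever; his mixed strategies are probability distributions on $E$. The searcher starts at $O$. At each stage $t=1,2,\dots$ she either stays at her current vertex or traverses an edge incident to it. The payoff to the hider is the first stage $t$ at which the searcher traverses $e$ (expected value under randomization). $\mathrm{val}(\mathbf 1)$ denotes the value of this game. A Chinese postman tour is a closed walk from $O$ traversing every edge at least once, of minimal length. The uniform Chinese postman strategy mixes with equal probability over all Chinese postman tours starting at $O$ and follows the chosen tour. For a tree rooted at $O$, orient every edge away from $O$. For an edge $e$ with head $w$, let $E_e$ be the set consisting of $e$ and all edges of the subtree below $w$. A leaf edge is an edge whose head has no outgoing edge. The equal branching density is the unique probability distribution $\varepsilon^*$ on $E$ such that: - $\varepsilon^*$ is supported on the leaf edges; - at every vertex $v$ with at least two outgoing edges $e_1,\dots,e_n$, the ratio $\varepsilon^*(E_{e_i})/|E_{e_i}|$ is the same for all $i$. *)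

theory Defs
  imports "HOL-Probability.Probability"
begin

definition rooted_graph :: "'v set \<Rightarrow> 'v set set \<Rightarrow> 'v \<Rightarrow> bool" where
  "rooted_graph V E r \<longleftrightarrow> finite V \<and> r \<in> V \<and>
     (\<forall>e\<in>E. \<exists>u v. e = {u, v} \<and> u \<noteq> v \<and> u \<in> V \<and> v \<in> V)"

definition adj :: "'v set set \<Rightarrow> ('v \<times> 'v) set" where
  "adj F = {(u, v). {u, v} \<in> F}"

definition reach :: "'v set set \<Rightarrow> 'v \<Rightarrow> 'v set" where
  "reach F r = {x. (r, x) \<in> (adj F)\<^sup>*}"

definition connected_graph :: "'v set \<Rightarrow> 'v set set \<Rightarrow> bool" where
  "connected_graph V E \<longleftrightarrow> (\<forall>u\<in>V. \<forall>v\<in>V. (u, v) \<in> (adj E)\<^sup>*)"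

definition acyclic_graph :: "'v set set \<Rightarrow> bool" where
  "acyclic_graph E \<longleftrightarrow> \<not> (\<exists>cs. length cs \<ge> 3 \<and> distinct cs \<and>
      (\<forall>i<length cs. {cs ! i, cs ! ((i + 1) mod length cs)} \<in> E))"

definition is_tree :: "'v set \<Rightarrow> 'v set set \<Rightarrow> bool" where
  "is_tree V E \<longleftrightarrow> connected_graph V E \<and> acyclic_graph E"

text \<open>Pure searcher strategies: infinite walks; position at time 0 is r, at each stage
  (t+1) she stays or traverses an edge incident to her current vertex.\<close>
definition walk :: "'v set set \<Rightarrow> 'v \<Rightarrow> (nat \<Rightarrow> 'v) \<Rightarrow> bool" where
  "walk E r w \<longleftrightarrow> w 0 = r \<and> (\<forall>t. w (Suc t) = w t \<or> {w t, w (Suc t)} \<in> E)"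

text \<open>Edge e is traversed at stage Suc t.\<close>
definition traverses_at :: "(nat \<Rightarrow> 'v) \<Rightarrow> 'v set \<Rightarrow> nat \<Rightarrow> bool" where
  "traverses_at w e t \<longleftrightarrow> w t \<noteq> w (Suc t) \<and> {w t, w (Suc t)} = e"

definition hit_time :: "(nat \<Rightarrow> 'v) \<Rightarrow> 'v set \<Rightarrow> ennreal" where
  "hit_time w e = (if \<exists>t. traverses_at w e t
      then of_nat (Suc (LEAST t. traverses_at w e t)) else \<infinity>)"

definition searcher_strategy :: "'v set set \<Rightarrow> 'v \<Rightarrow> (nat \<Rightarrow> 'v) pmf \<Rightarrow> bool" where
  "searcher_strategy E r \<sigma> \<longleftrightarrow> set_pmf \<sigma> \<subseteq> {w. walk E r w}"

definition hider_strategy :: "'v set set \<Rightarrow> ('v set \<Rightarrow> real) \<Rightarrow> bool" where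
  "hider_strategy E p \<longleftrightarrow> (\<forall>e\<in>E. p e \<ge> 0) \<and> (\<Sum>e\<in>E. p e) = 1"

definition searcher_guarantee :: "'v set set \<Rightarrow> (nat \<Rightarrow> 'v) pmf \<Rightarrow> ennreal" where
  "searcher_guarantee E \<sigma> = (SUP e\<in>E. \<integral>\<^sup>+ w. hit_time w e \<partial>measure_pmf \<sigma>)"

definition hider_guarantee :: "'v set set \<Rightarrow> 'v \<Rightarrow> ('v set \<Rightarrow> real) \<Rightarrow> ennreal" where
  "hider_guarantee E r p = (INF w\<in>{w. walk E r w}. \<Sum>e\<in>E. ennreal (p e) * hit_time w e)"

definition game_val :: "'v set set \<Rightarrow> 'v \<Rightarrow> ennreal" where
  "game_val E r = (INF \<sigma>\<in>{\<sigma>. searcher_strategy E r \<sigma>}. searcher_guarantee E \<sigma>)"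

definition closed_cover_walk :: "'v set set \<Rightarrow> 'v \<Rightarrow> 'v list \<Rightarrow> bool" where
  "closed_cover_walk E r xs \<longleftrightarrow> xs \<noteq> [] \<and> hd xs = r \<and> last xs = r \<and>
     (\<forall>i. Suc i < length xs \<longrightarrow> {xs ! i, xs ! Suc i} \<in> E) \<and>
     (\<forall>e\<in>E. \<exists>i. Suc i < length xs \<and> {xs ! i, xs ! Suc i} = e)"

definition chinese_postman_tour :: "'v set set \<Rightarrow> 'v \<Rightarrow> 'v list \<Rightarrow> bool" where
  "chinese_postman_tour E r xs \<longleftrightarrow> closed_cover_walk E r xs \<and>
     (\<forall>ys. closed_cover_walk E r ys \<longrightarrow> length xs \<le> length ys)"

definition follow_tour :: "'v \<Rightarrow> 'v list \<Rightarrow> nat \<Rightarrow> 'v" where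
  "follow_tour r xs t = (if t < length xs then xs ! t else r)"

definition uniform_CPT :: "'v set set \<Rightarrow> 'v \<Rightarrow> (nat \<Rightarrow> 'v) pmf" where
  "uniform_CPT E r = map_pmf (follow_tour r) (pmf_of_set {xs. chinese_postman_tour E r xs})"

definition edge_head :: "'v set set \<Rightarrow> 'v \<Rightarrow> 'v set \<Rightarrow> 'v" where
  "edge_head E r e = (THE w. w \<in> e \<and> w \<notin> reach (E - {e}) r)"

text \<open>E_e: the edge e together with all edges of the subtree below its head.\<close>
definition below :: "'v set set \<Rightarrow> 'v \<Rightarrow> 'v set \<Rightarrow> 'v set set" where
  "below E r e = insert e {f \<in> E. f \<inter> reach (E - {e}) r = {}}"

definition out_edges :: "'v set set \<Rightarrow> 'v \<Rightarrow> 'v \<Rightarrow> 'v set set" where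
  "out_edges E r v = {e \<in> E. v \<in> e \<and> edge_head E r e \<noteq> v}"

definition leaf_edge :: "'v set set \<Rightarrow> 'v \<Rightarrow> 'v set \<Rightarrow> bool" where
  "leaf_edge E r e \<longleftrightarrow> out_edges E r (edge_head E r e) = {}"

definition equal_branching_density ::
    "'v set \<Rightarrow> 'v set set \<Rightarrow> 'v \<Rightarrow> ('v set \<Rightarrow> real) \<Rightarrow> bool" where
  "equal_branching_density V E r \<epsilon> \<longleftrightarrow> hider_strategy E \<epsilon> \<and>
     (\<forall>e\<in>E. \<not> leaf_edge E r e \<longrightarrow> \<epsilon> e = 0) \<and>
     (\<forall>v\<in>V. card (out_edges E r v) \<ge> 2 \<longrightarrow>
        (\<forall>e1\<in>out_edges E r v. \<forall>e2\<in>out_edges E r v.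
           (\<Sum>f\<in>below E r e1. \<epsilon> f) / real (card (below E r e1)) =
           (\<Sum>f\<in>below E r e2. \<epsilon> f) / real (card (below E r e2))))"

end

(*
  Upper bounds come from a searcher who follows a closed walk W covering every edge, forwards
  or backwards with probability 1/2: an edge crossed at steps i <= j of W is found at expected
  time at most |W|/2. If G has a cycle of length k >= 3, going round it and adding a detour of
  length 2 for every other edge gives |W| = 2|E| - k + 1, so val < |E|. In a tree every closed
  walk from O crosses each edge an even number of times, since the parity of the crossings of e
  records on which side of e the walk is. So a Chinese postman tour crosses every edge twice and
  has 2|E| + 1 vertices, and pairing each tour with its reversal shows that the uniform Chinese
  postman strategy guarantees |E|.

  For the matching lower bound fix a walk w and the equal branching density, and rank every
  leaf edge by the time w first crosses it. When the leaf edge l is first crossed, every edge f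
  with a leaf edge of no larger rank below it has been crossed, and crossed back unless l lies
  below f. This bounds the hit time of l from below by a purely combinatorial quantity whose
  mean under the density is at least |E|; that inequality is proved bottom-up over the tree,
  equal branching being exactly what lets sibling subtrees, which then carry the same density
  per edge, be merged.
*)

theory Submission
  imports Defs
begin

section \<open>Walks given by vertex lists\<close>

lemma adj_sym: "sym (adj F)"
  by (auto simp: adj_def sym_def insert_commute)

lemma rtrancl_adj_sym: "(x, y) \<in> (adj F)\<^sup>* \<Longrightarrow> (y, x) \<in> (adj F)\<^sup>*"
  using sym_rtrancl[OF adj_sym] by (rule symD)

lemma reach_step: "x \<in> reach F s \<Longrightarrow> {x, y} \<in> F \<Longrightarrow> y \<in> reach F s"
  unfolding reach_def adj_def by (auto intro: rtrancl_into_rtrancl)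

fun walk_edges :: "'v list \<Rightarrow> 'v set set" where
  "walk_edges (x # y # xs) = insert {x, y} (walk_edges (y # xs))"
| "walk_edges _ = {}"

lemma walk_edges_conv_nth: "walk_edges xs = {{xs ! i, xs ! Suc i} | i. Suc i < length xs}"
proof (induction xs rule: walk_edges.induct)
  case (1 x y xs)
  have "{{(x # y # xs) ! i, (x # y # xs) ! Suc i} | i. Suc i < length (x # y # xs)}
      = insert {x, y} {{(y # xs) ! i, (y # xs) ! Suc i} | i. Suc i < length (y # xs)}"
    (is "?L = ?R")
  proof
    show "?L \<subseteq> ?R"
    proof
      fix z assume "z \<in> ?L"
      then obtain i where "z = {(x # y # xs) ! i, (x # y # xs) ! Suc i}" "Suc i < length (x # y # xs)"
        by blast
      then show "z \<in> ?R" by (cases i) auto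
    qed
    show "?R \<subseteq> ?L"
    proof
      fix z assume "z \<in> ?R"
      then consider "z = {x, y}"
        | j where "z = {(y # xs) ! j, (y # xs) ! Suc j}" "Suc j < length (y # xs)" by blast
      then show "z \<in> ?L"
      proof cases
        case 1 then show ?thesis by (auto intro!: exI[of _ 0])
      next
        case 2 then show ?thesis by (auto intro!: exI[of _ "Suc j"])
      qed
    qed
  qed
  then show ?case using 1 by simp
qed auto

lemma walk_edges_append: "walk_edges (xs @ y # ys) = walk_edges (xs @ [y]) \<union> walk_edges (y # ys)"
  by (induction xs rule: walk_edges.induct) auto

lemma walk_edges_snoc: "xs \<noteq> [] \<Longrightarrow> walk_edges (xs @ [y]) = insert {last xs, y} (walk_edges xs)"
  by (induction xs rule: walk_edges.induct) auto

lemma walk_edges_Cons: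
  "walk_edges (x # xs) = (if xs = [] then {} else insert {x, hd xs} (walk_edges xs))"
  by (cases xs) auto

lemma walk_edges_append_nonempty:
  "xs \<noteq> [] \<Longrightarrow> ys \<noteq> [] \<Longrightarrow>
     walk_edges (xs @ ys) = walk_edges xs \<union> walk_edges ys \<union> {{last xs, hd ys}}"
  by (induction xs) (auto simp: walk_edges_Cons insert_commute)

lemma walk_edges_rev: "walk_edges (rev xs) = walk_edges xs"
proof (induction xs rule: walk_edges.induct)
  case (1 x y xs)
  have "walk_edges (rev (x # y # xs)) = insert {y, x} (walk_edges (rev (y # xs)))"
    using walk_edges_snoc[of "rev (y # xs)" x] by simp
  then show ?case using 1 by (simp add: insert_commute)
qed auto

lemma walk_edges_vertex: "e \<in> walk_edges xs \<Longrightarrow> x \<in> e \<Longrightarrow> x \<in> set xs"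
  by (induction xs rule: walk_edges.induct) auto

lemma rtrancl_adj_distinct_path:
  assumes "(x, y) \<in> (adj F)\<^sup>*"
  obtains ps where "ps \<noteq> []" "hd ps = x" "last ps = y" "distinct ps" "walk_edges ps \<subseteq> F"
proof -
  from assms have "\<exists>ps. ps \<noteq> [] \<and> hd ps = x \<and> last ps = y \<and> distinct ps \<and> walk_edges ps \<subseteq> F"
  proof (induction rule: rtrancl_induct)
    case base
    show ?case by (intro exI[of _ "[x]"]) simp
  next
    case (step y z)
    then obtain ps where ps: "ps \<noteq> []" "hd ps = x" "last ps = y" "distinct ps" "walk_edges ps \<subseteq> F"
      by blast
    have yz: "{y, z} \<in> F" using step(2) by (simp add: adj_def)
    show ?case
    proof (cases "z \<in> set ps")
      case True
      then obtain as bs where ab: "ps = as @ z # bs" by (meson split_list)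
      have "walk_edges (as @ [z]) \<subseteq> F"
        using ps(5) unfolding ab walk_edges_append[of as z bs] by blast
      moreover have "hd (as @ [z]) = x" using ps(2) ab by (cases as) simp_all
      ultimately show ?thesis using ps(4) ab by (intro exI[of _ "as @ [z]"]) simp
    next
      case False
      then show ?thesis using ps yz by (intro exI[of _ "ps @ [z]"]) (simp add: walk_edges_snoc)
    qed
  qed
  then show ?thesis using that by blast
qed

lemma closed_distinct_path_not_acyclic:
  assumes "distinct ps" "length ps \<ge> 3" "walk_edges ps \<subseteq> E" "{last ps, hd ps} \<in> E"
  shows "\<not> acyclic_graph E"
proof -
  have "{ps ! i, ps ! ((i + 1) mod length ps)} \<in> E" if i: "i < length ps" for i
  proof (cases "Suc i < length ps")
    case True
    then have "{ps ! i, ps ! Suc i} \<in> E" using assms(3) unfolding walk_edges_conv_nth by blast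
    then show ?thesis using True by simp
  next
    case False
    then have "i = length ps - 1" "Suc i = length ps" using i by simp_all
    moreover have "ps \<noteq> []" using assms(2) by auto
    ultimately have "ps ! i = last ps" "(i + 1) mod length ps = 0"
      by (simp_all add: last_conv_nth)
    moreover have "ps ! 0 = hd ps" using assms(2) by (cases ps) auto
    ultimately show ?thesis using assms(4) by (simp add: insert_commute)
  qed
  then show ?thesis using assms(1,2) unfolding acyclic_graph_def by blast
qed

section \<open>Rooted graphs and trees oriented away from the root\<close>

locale connected_rooted_graph =
  fixes V :: "'v set" and E :: "'v set set" and r :: 'v
  assumes rooted: "rooted_graph V E r" and connected: "connected_graph V E"
begin

lemma finite_V: "finite V" and root_in_V: "r \<in> V"
  using rooted by (auto simp: rooted_graph_def)

lemma edgeE: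
  assumes "e \<in> E"
  obtains a b where "e = {a, b}" "a \<noteq> b" "a \<in> V" "b \<in> V"
  using rooted assms by (auto simp: rooted_graph_def)

lemma edges_subset_Pow: "E \<subseteq> Pow V"
  by (auto elim: edgeE)

lemma finite_E: "finite E"
  using edges_subset_Pow finite_V by (meson finite_Pow_iff finite_subset)

lemma rtrancl_adj_connected: "u \<in> V \<Longrightarrow> v \<in> V \<Longrightarrow> (u, v) \<in> (adj E)\<^sup>*"
  using connected by (auto simp: connected_graph_def)

lemma edge_other_endpoint: "e \<in> E \<Longrightarrow> x \<in> e \<Longrightarrow> \<exists>y. e = {x, y} \<and> x \<noteq> y"
  by (auto elim!: edgeE)

lemma edge_endpoints_distinct: "{x, y} \<in> E \<Longrightarrow> x \<noteq> y"
  by (metis doubleton_eq_iff edgeE)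

abbreviation root_comp :: "'v set \<Rightarrow> 'v set" where
  "root_comp e \<equiv> reach (E - {e}) r"

lemma root_in_root_comp: "r \<in> root_comp e"
  by (auto simp: reach_def)

lemma root_comp_edge_closed:
  assumes "e \<in> E" "e \<noteq> f" "a \<in> e" "b \<in> e" "a \<in> root_comp f"
  shows "b \<in> root_comp f"
proof (cases "a = b")
  case False
  then have "e = {a, b}" using assms(1,3,4) by (auto elim!: edgeE)
  then show ?thesis using reach_step[OF assms(5), of b] assms(1,2) by auto
qed (use assms in auto)

lemma edge_meets_root_comp:
  assumes "e \<in> E"
  shows "\<exists>x\<in>e. x \<in> root_comp e"
proof -
  obtain a b where ab: "e = {a, b}" "a \<noteq> b" "a \<in> V" "b \<in> V" by (rule edgeE[OF assms])
  have "x \<in> root_comp e \<or> a \<in> root_comp e \<or> b \<in> root_comp e" if "(r, x) \<in> (adj E)\<^sup>*" for x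
    using that
  proof (induction rule: rtrancl_induct)
    case base then show ?case using root_in_root_comp by blast
  next
    case (step y z)
    have yz: "{y, z} \<in> E" using step(2) unfolding adj_def by blast
    show ?case
    proof (cases "{y, z} = e")
      case True
      then have "y = a \<or> y = b" using ab(1) by blast
      then show ?thesis using step(3) by blast
    next
      case False
      then show ?thesis using yz step(3) reach_step[of y "E - {e}" r z] by blast
    qed
  qed
  then show ?thesis using rtrancl_adj_connected[OF root_in_V ab(3)] ab(1) by blast
qed

end

locale rooted_tree = connected_rooted_graph +
  assumes acyclic: "acyclic_graph E"
begin

lemma edge_not_within_root_comp:
  assumes e: "e \<in> E" "e = {a, b}" "a \<noteq> b" and a: "a \<in> root_comp e" and b: "b \<in> root_comp e"
  shows False
proof -
  have "(a, r) \<in> (adj (E - {e}))\<^sup>*" using a by (simp add: reach_def rtrancl_adj_sym)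
  then have "(a, b) \<in> (adj (E - {e}))\<^sup>*" using b by (simp add: reach_def)
  then obtain ps where ps: "ps \<noteq> []" "hd ps = a" "last ps = b" "distinct ps" "walk_edges ps \<subseteq> E - {e}"
    by (rule rtrancl_adj_distinct_path)
  have "length ps \<noteq> 1" using ps(1-3) e(3) by (cases ps) auto
  moreover have "length ps \<noteq> 2"
  proof
    assume "length ps = 2"
    then obtain z y where "ps = [z, y]" by (cases ps; cases "tl ps") auto
    then show False using ps(2,3,5) e(2) by auto
  qed
  ultimately have "length ps \<ge> 3" using ps(1) by (cases "length ps") (auto simp: numeral_eq_Suc)
  moreover have "{last ps, hd ps} \<in> E" using ps(2,3) e(1,2) by (simp add: insert_commute)
  ultimately show False using closed_distinct_path_not_acyclic ps(4,5) acyclic by blast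
qed

definition edge_tail :: "'a set \<Rightarrow> 'a" where
  "edge_tail e = (THE w. w \<in> e \<and> w \<in> root_comp e)"

abbreviation head :: "'a set \<Rightarrow> 'a" where "head e \<equiv> edge_head E r e"
abbreviation subtree :: "'a set \<Rightarrow> 'a set set" where "subtree e \<equiv> below E r e"
abbreviation out :: "'a \<Rightarrow> 'a set set" where "out v \<equiv> out_edges E r v"
abbreviation leaf :: "'a set \<Rightarrow> bool" where "leaf e \<equiv> leaf_edge E r e"

lemma edge_tail_head:
  assumes "e \<in> E"
  shows "e = {edge_tail e, head e}" "edge_tail e \<noteq> head e"
    "edge_tail e \<in> root_comp e" "head e \<notin> root_comp e"
proof -
  obtain a where a: "a \<in> e" "a \<in> root_comp e" using edge_meets_root_comp assms by blast
  obtain b where b: "e = {a, b}" "a \<noteq> b" using edge_other_endpoint[OF assms a(1)] by blast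
  have "b \<notin> root_comp e" using edge_not_within_root_comp[OF assms b a(2)] by blast
  moreover have "edge_tail e = a" unfolding edge_tail_def
    by (rule the_equality) (use a b \<open>b \<notin> root_comp e\<close> in auto)
  moreover have "head e = b" unfolding edge_head_def
    by (rule the_equality) (use a b \<open>b \<notin> root_comp e\<close> in auto)
  ultimately show "e = {edge_tail e, head e}" "edge_tail e \<noteq> head e"
    "edge_tail e \<in> root_comp e" "head e \<notin> root_comp e"
    using a b by auto
qed

lemma mem_edge_iff: "e \<in> E \<Longrightarrow> x \<in> e \<longleftrightarrow> x = edge_tail e \<or> x = head e"
  using edge_tail_head(1) by blast

lemma edge_tail_in: "e \<in> E \<Longrightarrow> edge_tail e \<in> e" and head_in: "e \<in> E \<Longrightarrow> head e \<in> e"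
  using mem_edge_iff by blast+

lemma endpoint_in_root_comp: "e \<in> E \<Longrightarrow> x \<in> e \<Longrightarrow> x \<in> root_comp e \<Longrightarrow> x = edge_tail e"
  using edge_tail_head(4)[of e] mem_edge_iff[of e x] by blast

lemma endpoint_not_in_root_comp: "e \<in> E \<Longrightarrow> x \<in> e \<Longrightarrow> x \<notin> root_comp e \<Longrightarrow> x = head e"
  using edge_tail_head(3)[of e] mem_edge_iff[of e x] by blast

lemma endpoints_separated:
  assumes "f \<in> E" "x \<in> f" "y \<in> f" "x \<noteq> y"
  shows "x \<in> root_comp f \<longleftrightarrow> y \<notin> root_comp f"
  using assms mem_edge_iff[OF assms(1)] edge_tail_head[OF assms(1)] by auto

lemma out_edges_iff: "f \<in> out v \<longleftrightarrow> f \<in> E \<and> edge_tail f = v"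
proof
  assume "f \<in> out v"
  then have f: "f \<in> E" "v \<in> f" "head f \<noteq> v" by (auto simp: out_edges_def)
  then show "f \<in> E \<and> edge_tail f = v" using mem_edge_iff[OF f(1), of v] by blast
next
  assume "f \<in> E \<and> edge_tail f = v"
  then show "f \<in> out v" using edge_tail_in[of f] edge_tail_head(2)[of f] by (auto simp: out_edges_def)
qed

lemma finite_out_edges: "finite (out v)"
  using finite_E by (rule rev_finite_subset) (auto simp: out_edges_def)

lemma root_comp_anti:
  assumes "h \<in> E" "h \<inter> root_comp g = {}"
  shows "root_comp g \<subseteq> root_comp h"
proof
  fix x assume "x \<in> root_comp g"
  then have "(r, x) \<in> (adj (E - {g}))\<^sup>*" by (simp add: reach_def)
  then have "(r, x) \<in> (adj (E - {h}))\<^sup>*"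
  proof (induction rule: rtrancl_induct)
    case (step y z)
    have "{y, z} \<in> E - {g}" using step(2) by (simp add: adj_def)
    moreover have "y \<in> root_comp g" using step(1) by (simp add: reach_def)
    then have "{y, z} \<noteq> h" using assms(2) by auto
    ultimately have "(y, z) \<in> adj (E - {h})" by (simp add: adj_def)
    then show ?case using step(3) by (meson rtrancl.rtrancl_into_rtrancl)
  qed simp
  then show "x \<in> root_comp h" by (simp add: reach_def)
qed

lemma subtree_subset_E: "g \<in> E \<Longrightarrow> subtree g \<subseteq> E"
  by (auto simp: below_def)

lemma subtree_self: "g \<in> subtree g"
  by (simp add: below_def)

lemma finite_subtree: "g \<in> E \<Longrightarrow> finite (subtree g)"
  using finite_E subtree_subset_E by (meson rev_finite_subset)

lemma card_subtree_pos: "f \<in> E \<Longrightarrow> card (subtree f) > 0"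
  using finite_subtree subtree_self card_gt_0_iff by blast

lemma subtree_trans: "h \<in> subtree g \<Longrightarrow> subtree h \<subseteq> subtree g"
proof (cases "h = g")
  case False
  assume "h \<in> subtree g"
  then have h: "h \<in> E" "h \<inter> root_comp g = {}" using False by (auto simp: below_def)
  then show ?thesis using root_comp_anti[OF h] by (auto simp: below_def)
qed simp

lemma mem_subtree_iff_head:
  assumes "l \<in> E" "f \<in> E"
  shows "l \<in> subtree f \<longleftrightarrow> head l \<notin> root_comp f"
proof (cases "l = f")
  case True then show ?thesis using edge_tail_head[OF assms(2)] subtree_self by auto
next
  case False
  have "head l \<in> l" "edge_tail l \<in> l" using edge_tail_head[OF assms(1)] by auto
  then have "l \<inter> root_comp f = {} \<longleftrightarrow> head l \<notin> root_comp f"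
    using root_comp_edge_closed[OF assms(1) False] by blast
  then show ?thesis using False assms by (auto simp: below_def)
qed

lemma rtrancl_from_head:
  assumes g: "g \<in> E" and x: "x \<in> V" "x \<notin> root_comp g"
  shows "(head g, x) \<in> (adj (E - {g}))\<^sup>*"
proof -
  have "(r, x) \<in> (adj E)\<^sup>*" using rtrancl_adj_connected root_in_V x by auto
  then have "x \<in> root_comp g \<or> (head g, x) \<in> (adj (E - {g}))\<^sup>*"
  proof (induction rule: rtrancl_induct)
    case base then show ?case using root_in_root_comp by auto
  next
    case (step y z)
    have yz: "{y, z} \<in> E" using step(2) by (simp add: adj_def)
    show ?case
    proof (cases "{y, z} = g")
      case True
      then show ?thesis using edge_tail_head[OF g] step(3) by (auto simp: doubleton_eq_iff)
    next
      case False
      then show ?thesis using step(3) reach_step[of y "E - {g}" r z] yz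
        by (auto simp: adj_def intro: rtrancl_into_rtrancl)
    qed
  qed
  then show ?thesis using x by auto
qed

text \<open>The hypothesis \<open>tail\<close> below says that \<open>s\<close> is the tail of every edge of \<open>F\<close> at \<open>s\<close>;
  it holds for \<open>s = r\<close> with \<open>F = E\<close>, and for \<open>s = head g\<close> with \<open>F = E - {g}\<close>.\<close>

lemma path_leaves_via_out_edge:
  assumes F: "F \<subseteq> E" and p: "(s, x) \<in> (adj F)\<^sup>*"
    and tail: "\<forall>e\<in>F. s \<in> e \<longrightarrow> s \<in> root_comp e"
  shows "x = s \<or> (\<exists>f\<in>out s. x \<notin> root_comp f)"
  using p
proof (induction rule: rtrancl_induct)
  case (step y z)
  have yz: "{y, z} \<in> F" using step(2) by (simp add: adj_def)
  then have yzE: "{y, z} \<in> E" using F by auto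
  from step(3) show ?case
  proof
    assume ys: "y = s"
    then have "y \<in> root_comp {y, z}" using tail yz by auto
    then have "edge_tail {y, z} = y" using endpoint_in_root_comp[OF yzE, of y] by auto
    moreover have "y \<noteq> z" using yzE by (rule edge_endpoints_distinct)
    ultimately have "z \<notin> root_comp {y, z}" using endpoint_in_root_comp[OF yzE] by auto
    moreover have "{y, z} \<in> out s" using ys yzE out_edges_iff \<open>edge_tail {y, z} = y\<close> by auto
    ultimately show ?thesis by blast
  next
    assume "\<exists>f\<in>out s. y \<notin> root_comp f"
    then obtain f where f: "f \<in> out s" "y \<notin> root_comp f" by blast
    have fE: "f \<in> E" "edge_tail f = s" using f(1) out_edges_iff by auto
    show ?thesis
    proof (cases "{y, z} = f")
      case True
      then have "z = s \<or> z = head f" using mem_edge_iff[OF fE(1)] fE(2) by auto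
      then show ?thesis using edge_tail_head[OF fE(1)] f(1) by auto
    next
      case False
      then have "z \<notin> root_comp f" using root_comp_edge_closed[OF yzE False, of z y] f(2) by auto
      then show ?thesis using f(1) by blast
    qed
  qed
qed simp

lemma path_crosses_at_tail:
  assumes F: "F \<subseteq> E" and p: "(a, x) \<in> (adj F)\<^sup>*" and f: "f \<in> E"
    and a: "a \<in> root_comp f" and x: "x \<notin> root_comp f"
  shows "(a, edge_tail f) \<in> (adj F)\<^sup>*"
proof -
  from p have "x \<in> root_comp f \<or> (a, edge_tail f) \<in> (adj F)\<^sup>*"
  proof (induction rule: rtrancl_induct)
    case base then show ?case using a by simp
  next
    case (step y z)
    have yzE: "{y, z} \<in> E" using step(2) F by (auto simp: adj_def)
    show ?case
    proof (cases "y \<in> root_comp f")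
      case True
      show ?thesis
      proof (cases "{y, z} = f")
        case True
        then show ?thesis using endpoint_in_root_comp[OF f _ \<open>y \<in> root_comp f\<close>] step(1) by auto
      next
        case False
        then show ?thesis using root_comp_edge_closed[OF yzE False, of y z] True by auto
      qed
    next
      case False
      then show ?thesis using step(2,3) by (auto intro: rtrancl_into_rtrancl)
    qed
  qed
  then show ?thesis using x by auto
qed

lemma head_is_tail_of_other_edges:
  assumes g: "g \<in> E" and e: "e \<in> E - {g}" "head g \<in> e"
  shows "head g \<in> root_comp e"
proof -
  obtain z where z: "e = {head g, z}" "head g \<noteq> z" using edge_other_endpoint e by blast
  have "z \<notin> root_comp g"
    using root_comp_edge_closed[of e g z "head g"] e z edge_tail_head(4)[OF g] by auto
  then have "e \<inter> root_comp g = {}" using z edge_tail_head[OF g] by auto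
  then have "edge_tail g \<in> root_comp e" using root_comp_anti e edge_tail_head[OF g] by auto
  then show ?thesis using root_comp_edge_closed[OF g, of e "edge_tail g" "head g"] e edge_tail_head[OF g]
    by auto
qed

lemma edge_in_out_subtree:
  assumes F: "F \<subseteq> E" and tail: "\<forall>e\<in>F. s \<in> e \<longrightarrow> s \<in> root_comp e"
    and h: "h \<in> F" "x \<in> h" and p: "(s, x) \<in> (adj F)\<^sup>*"
  shows "\<exists>f\<in>out s. h \<in> subtree f"
proof -
  have hE: "h \<in> E" using F h by auto
  from path_leaves_via_out_edge[OF F p tail] show ?thesis
  proof
    assume "x = s"
    then have "edge_tail h = s" using endpoint_in_root_comp[OF hE] h tail by auto
    then show ?thesis using hE out_edges_iff subtree_self by blast
  next
    assume "\<exists>f\<in>out s. x \<notin> root_comp f"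
    then obtain f where f: "f \<in> out s" "x \<notin> root_comp f" by blast
    show ?thesis
    proof (cases "h = f")
      case True then show ?thesis using f subtree_self by blast
    next
      case False
      have "h \<inter> root_comp f = {}" using root_comp_edge_closed[OF hE False] h(2) f(2) by blast
      then show ?thesis using f hE by (auto simp: below_def)
    qed
  qed
qed

lemma edge_in_root_subtree: "h \<in> E \<Longrightarrow> \<exists>f\<in>out r. h \<in> subtree f"
  by (rule edgeE, assumption)
    (metis edge_in_out_subtree insertI1 order_refl root_in_root_comp rtrancl_adj_connected root_in_V)

lemma edge_in_child_subtree:
  assumes g: "g \<in> E" and h: "h \<in> subtree g" "h \<noteq> g"
  shows "\<exists>f\<in>out (head g). h \<in> subtree f"
proof -
  have hE: "h \<in> E" "h \<inter> root_comp g = {}" using h by (auto simp: below_def)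
  obtain a b where ab: "h = {a, b}" "a \<in> V" by (rule edgeE[OF hE(1)])
  have "(head g, a) \<in> (adj (E - {g}))\<^sup>*" using rtrancl_from_head[OF g ab(2)] hE ab by auto
  then show ?thesis
    using edge_in_out_subtree[of "E - {g}"] head_is_tail_of_other_edges[OF g] ab hE h by auto
qed

lemma child_subtree:
  assumes g: "g \<in> E" and f: "f \<in> out (head g)"
  shows "f \<in> subtree g" "f \<noteq> g" "subtree f \<subseteq> subtree g" "g \<notin> subtree f"
proof -
  have fE: "f \<in> E" "edge_tail f = head g" using f out_edges_iff by auto
  have fg: "f \<noteq> g" using fE edge_tail_head[OF g] by auto
  have "head f \<notin> root_comp g"
  proof
    assume "head f \<in> root_comp g"
    then have "edge_tail f \<in> root_comp g"
      using root_comp_edge_closed[OF fE(1) fg] edge_tail_head[OF fE(1)] by auto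
    then show False using fE(2) edge_tail_head[OF g] by auto
  qed
  then have disj: "f \<inter> root_comp g = {}"
    using mem_edge_iff[OF fE(1)] fE(2) edge_tail_head(4)[OF g] by auto
  show fB: "f \<in> subtree g" using disj fE by (auto simp: below_def)
  show "f \<noteq> g" by (rule fg)
  show "subtree f \<subseteq> subtree g" using subtree_trans[OF fB] .
  have "edge_tail g \<in> root_comp f" using root_comp_anti[OF fE(1) disj] edge_tail_head[OF g] by auto
  then show "g \<notin> subtree f" using fg edge_tail_in[OF g] by (auto simp: below_def)
qed

lemma sibling_subtrees_disjoint:
  assumes f1: "f1 \<in> out v" and f2: "f2 \<in> out v" and ne: "f1 \<noteq> f2"
  shows "subtree f1 \<inter> subtree f2 = {}"
proof (rule ccontr)
  assume "subtree f1 \<inter> subtree f2 \<noteq> {}"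
  then obtain k where k: "k \<in> subtree f1" "k \<in> subtree f2" by blast
  have f1E: "f1 \<in> E" "edge_tail f1 = v" and f2E: "f2 \<in> E" "edge_tail f2 = v"
    using f1 f2 out_edges_iff by auto
  have v: "v \<in> root_comp f1" "v \<in> root_comp f2" "v \<in> f1" "v \<in> f2"
    using edge_tail_head(3)[OF f1E(1)] edge_tail_head(3)[OF f2E(1)]
      edge_tail_in[OF f1E(1)] edge_tail_in[OF f2E(1)] f1E(2) f2E(2) by auto
  have "k \<noteq> f1"
  proof
    assume "k = f1"
    then have "f1 \<inter> root_comp f2 = {}" using k(2) ne by (simp add: below_def)
    then show False using v(2,3) by blast
  qed
  moreover have "k \<noteq> f2"
  proof
    assume "k = f2"
    then have "f2 \<inter> root_comp f1 = {}" using k(1) ne by (simp add: below_def)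
    then show False using v(1,4) by blast
  qed
  ultimately have kk: "k \<in> E" "k \<inter> root_comp f1 = {}" "k \<inter> root_comp f2 = {}"
    using k by (auto simp: below_def)
  obtain x y where xy: "k = {x, y}" "x \<in> V" by (rule edgeE[OF kk(1)])
  have x: "x \<notin> root_comp f1" "x \<notin> root_comp f2" using kk xy by auto
  have "head f1 \<in> root_comp f2"
    using root_comp_edge_closed[OF f1E(1), of f2 v "head f1"] ne v edge_tail_head[OF f1E(1)] by auto
  then have "(head f1, v) \<in> (adj (E - {f1}))\<^sup>*"
    using path_crosses_at_tail[OF _ rtrancl_from_head[OF f1E(1) xy(2) x(1)] f2E(1) _ x(2)] f2E by auto
  moreover have "(r, v) \<in> (adj (E - {f1}))\<^sup>*" using v by (simp add: reach_def)
  ultimately have "(r, head f1) \<in> (adj (E - {f1}))\<^sup>*" using rtrancl_adj_sym by (meson rtrancl_trans)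
  then show False using edge_tail_head[OF f1E(1)] by (simp add: reach_def)
qed

lemma out_edges_subset_subtree:
  assumes k: "k \<in> out u" "k \<in> subtree f" and f: "f \<in> out v" and uv: "u \<noteq> v"
  shows "out u \<subseteq> subtree f"
proof
  fix k' assume k': "k' \<in> out u"
  have kE: "k \<in> E" "edge_tail k = u" and fE: "f \<in> E" "edge_tail f = v"
    and k'E: "k' \<in> E" "edge_tail k' = u"
    using k f k' out_edges_iff by auto
  have "k \<inter> root_comp f = {}" using k(2) kE fE uv by (auto simp: below_def)
  then have "u \<notin> root_comp f" using edge_tail_in[OF kE(1)] kE(2) by auto
  moreover have "k' \<noteq> f" "u \<in> k'" using k'E fE uv edge_tail_in[OF k'E(1)] by auto
  ultimately have "k' \<inter> root_comp f = {}" using root_comp_edge_closed[OF k'E(1)] by blast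
  then show "k' \<in> subtree f" using k'E by (auto simp: below_def)
qed

lemma subtree_decomp:
  assumes "g \<in> E"
  shows "subtree g = insert g (\<Union>(subtree ` out (head g)))" "g \<notin> \<Union>(subtree ` out (head g))"
proof -
  show "subtree g = insert g (\<Union>(subtree ` out (head g)))"
  proof
    show "subtree g \<subseteq> insert g (\<Union>(subtree ` out (head g)))"
      using edge_in_child_subtree[OF assms] by blast
    show "insert g (\<Union>(subtree ` out (head g))) \<subseteq> subtree g"
      using child_subtree(3)[OF assms] subtree_self by blast
  qed
  show "g \<notin> \<Union>(subtree ` out (head g))" using child_subtree(4)[OF assms] by blast
qed

lemma edges_decomp: "E = \<Union>(subtree ` out r)"
  using edge_in_root_subtree subtree_subset_E out_edges_iff by blast

lemma leaf_subtree: "g \<in> E \<Longrightarrow> leaf g \<Longrightarrow> subtree g = {g}"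
  using subtree_decomp by (auto simp: leaf_edge_def)

lemma card_child_subtree_less:
  assumes "g \<in> E" "f \<in> out (head g)"
  shows "card (subtree f) < card (subtree g)"
proof -
  have "subtree f \<subset> subtree g" using child_subtree[OF assms] subtree_self[of g] by blast
  then show ?thesis by (rule psubset_card_mono[OF finite_subtree[OF assms(1)]])
qed

lemma subtree_has_leaf: "g \<in> E \<Longrightarrow> \<exists>l\<in>subtree g. leaf l \<and> l \<in> E"
proof (induction "card (subtree g)" arbitrary: g rule: less_induct)
  case less
  show ?case
  proof (cases "leaf g")
    case True then show ?thesis using less subtree_self by blast
  next
    case False
    then obtain f where f: "f \<in> out (head g)" by (auto simp: leaf_edge_def)
    then have "f \<in> E" using out_edges_iff by auto
    then show ?thesis
      using less(1)[OF card_child_subtree_less[OF less(2) f]] child_subtree(3)[OF less(2) f] by blast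
  qed
qed

end

section \<open>The potential inequality\<close>

lemma card_times_card_le_comparisons:
  fixes \<phi> :: "'a \<Rightarrow> 'b::linorder"
  shows "real (card X) * real (card Y) \<le>
    (\<Sum>f\<in>Y. \<Sum>g\<in>X. if \<phi> g < \<phi> f then 0 else 1) + (\<Sum>g\<in>X. \<Sum>f\<in>Y. if \<phi> f < \<phi> g then 0 else 1)"
proof -
  have "real (card X) * real (card Y) = (\<Sum>g\<in>X. \<Sum>f\<in>Y. 1::real)"
    by (cases "finite X"; cases "finite Y") simp_all
  also have "\<dots> \<le> (\<Sum>g\<in>X. \<Sum>f\<in>Y. (if \<phi> g < \<phi> f then 0 else 1) + (if \<phi> f < \<phi> g then 0 else 1))"
    by (intro sum_mono) auto
  also have "\<dots> = (\<Sum>f\<in>Y. \<Sum>g\<in>X. if \<phi> g < \<phi> f then 0 else 1) + (\<Sum>g\<in>X. \<Sum>f\<in>Y. if \<phi> f < \<phi> g then 0 else 1)"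
    by (simp add: sum.distrib sum.swap[of _ Y])
  finally show ?thesis .
qed

text \<open>\<open>\<rho>\<close> is an arbitrary ranking of the edges; it will be the time at which a fixed walk first
  crosses them.\<close>
locale ranked_equal_branching = rooted_tree +
  fixes \<epsilon> :: "'a set \<Rightarrow> real" and \<rho> :: "'a set \<Rightarrow> nat"
  assumes equal_branching: "equal_branching_density V E r \<epsilon>"
begin

lemma density_nonneg: "e \<in> E \<Longrightarrow> \<epsilon> e \<ge> 0"
  and density_sum: "(\<Sum>e\<in>E. \<epsilon> e) = 1"
  and density_nonleaf: "e \<in> E \<Longrightarrow> \<not> leaf e \<Longrightarrow> \<epsilon> e = 0"
  using equal_branching by (auto simp: equal_branching_density_def hider_strategy_def)

definition mass :: "'a set set \<Rightarrow> real" where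
  "mass X = (\<Sum>l\<in>X. \<epsilon> l)"

lemma mass_nonneg: "X \<subseteq> E \<Longrightarrow> mass X \<ge> 0"
  unfolding mass_def using density_nonneg by (auto intro: sum_nonneg)

lemma sibling_density_eq:
  assumes v: "v \<in> V" and f1: "f1 \<in> out v" and f2: "f2 \<in> out v"
  shows "mass (subtree f1) / real (card (subtree f1)) = mass (subtree f2) / real (card (subtree f2))"
proof (cases "f1 = f2")
  case False
  have "card {f1, f2} \<le> card (out v)" using f1 f2 by (intro card_mono[OF finite_out_edges]) simp
  then have "card (out v) \<ge> 2" using False by simp
  then show ?thesis using equal_branching v f1 f2 unfolding equal_branching_density_def mass_def by blast
qed simp

definition leaves_below :: "'a set \<Rightarrow> 'a set set" where
  "leaves_below f = {l \<in> subtree f. leaf l}"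

definition min_rank :: "'a set \<Rightarrow> nat" where
  "min_rank f = Min (\<rho> ` leaves_below f)"

lemma min_rank_le: "f \<in> E \<Longrightarrow> l \<in> subtree f \<Longrightarrow> leaf l \<Longrightarrow> min_rank f \<le> \<rho> l"
  unfolding min_rank_def leaves_below_def using finite_subtree by (auto intro!: Min_le)

lemma min_rank_attained:
  assumes "f \<in> E"
  obtains l where "l \<in> subtree f" "leaf l" "\<rho> l = min_rank f"
proof -
  have "leaves_below f \<noteq> {}" "finite (leaves_below f)"
    using subtree_has_leaf[OF assms] finite_subtree[OF assms] by (auto simp: leaves_below_def)
  then have "min_rank f \<in> \<rho> ` leaves_below f" unfolding min_rank_def by (intro Min_in) auto
  then show ?thesis using that by (auto simp: leaves_below_def)
qed

lemma min_rank_leaf: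
  assumes "g \<in> E" "leaf g"
  shows "min_rank g = \<rho> g"
proof -
  have "leaves_below g = {g}" using leaf_subtree[OF assms] assms(2) by (auto simp: leaves_below_def)
  then show ?thesis by (simp add: min_rank_def)
qed

definition n_reached :: "'a set set \<Rightarrow> nat \<Rightarrow> real" where
  "n_reached X t = (\<Sum>f\<in>X. if min_rank f < t then 1 else 0)"

definition early_mass :: "'a set set \<Rightarrow> nat \<Rightarrow> real" where
  "early_mass X t = (\<Sum>l\<in>X. if \<rho> l < t then \<epsilon> l else 0)"

definition n_above :: "'a set set \<Rightarrow> 'a set \<Rightarrow> real" where
  "n_above X l = (\<Sum>f\<in>X. if l \<in> subtree f then 1 else 0)"

text \<open>If \<open>\<rho> l\<close> is the time at which a walk first crosses \<open>l\<close>, the walk has by then crossed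
  every edge whose subtree contains a leaf of rank at most \<open>\<rho> l\<close>, and crossed it back unless \<open>l\<close>
  lies below it; so the factor of \<open>\<epsilon> l\<close> is a lower bound for the hit time of \<open>l\<close>.\<close>
definition potential :: "'a set set \<Rightarrow> real" where
  "potential X = (\<Sum>l\<in>X. \<epsilon> l * (2 * n_reached X (Suc (\<rho> l)) - n_above X l))"

text \<open>The invariant of the bottom-up induction: on \<open>X\<close> the density is \<open>c\<close> per edge, the leaves
  of small rank carry at most their share of it, and \<open>potential X \<ge> c |X|\<^sup>2\<close>.\<close>
definition balanced :: "real \<Rightarrow> 'a set set \<Rightarrow> bool" where
  "balanced c X \<longleftrightarrow> mass X = c * real (card X) \<and> (\<forall>t. early_mass X t \<le> c * n_reached X t)
     \<and> c * real (card X) ^ 2 \<le> potential X"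

definition down_closed :: "'a set set \<Rightarrow> bool" where
  "down_closed X \<longleftrightarrow> finite X \<and> X \<subseteq> E \<and> (\<forall>f\<in>X. subtree f \<subseteq> X)"

lemma down_closed_subtree: "f \<in> E \<Longrightarrow> down_closed (subtree f)"
  unfolding down_closed_def using finite_subtree subtree_subset_E subtree_trans by blast

lemma cross_potential_lower:
  assumes X: "finite X" "X \<subseteq> E" and Y: "finite Y"
    and early: "\<forall>t. early_mass X t \<le> c * n_reached X t" and mass: "mass X = c * real (card X)"
  shows "c * (\<Sum>f\<in>Y. \<Sum>g\<in>X. if min_rank g < min_rank f then 0 else 1)
    \<le> (\<Sum>l\<in>X. \<epsilon> l * n_reached Y (Suc (\<rho> l)))"
proof -
  have count: "(\<Sum>g\<in>X. if min_rank g < t then 0 else 1) = real (card X) - n_reached X t" for t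
  proof -
    have "(\<Sum>g\<in>X. if min_rank g < t then 0 else 1)
        = (\<Sum>g\<in>X. 1 - (if min_rank g < t then 1 else 0 :: real))"
      by (rule sum.cong) auto
    then show ?thesis unfolding n_reached_def by (simp add: sum_subtractf)
  qed
  have early_compl: "(\<Sum>l\<in>X. if t < Suc (\<rho> l) then \<epsilon> l else 0) = mass X - early_mass X t" for t
  proof -
    have "(\<Sum>l\<in>X. if t < Suc (\<rho> l) then \<epsilon> l else 0)
        = (\<Sum>l\<in>X. \<epsilon> l - (if \<rho> l < t then \<epsilon> l else 0))"
      by (rule sum.cong) auto
    then show ?thesis unfolding mass_def early_mass_def by (simp add: sum_subtractf)
  qed
  have "c * (\<Sum>f\<in>Y. \<Sum>g\<in>X. if min_rank g < min_rank f then 0 else 1)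
      = (\<Sum>f\<in>Y. c * real (card X) - c * n_reached X (min_rank f))"
    by (simp add: sum_distrib_left count right_diff_distrib)
  also have "\<dots> \<le> (\<Sum>f\<in>Y. mass X - early_mass X (min_rank f))"
    using early mass by (intro sum_mono) auto
  also have "\<dots> = (\<Sum>f\<in>Y. \<Sum>l\<in>X. if min_rank f < Suc (\<rho> l) then \<epsilon> l else 0)"
    by (simp add: early_compl)
  also have "\<dots> = (\<Sum>l\<in>X. \<epsilon> l * n_reached Y (Suc (\<rho> l)))"
    unfolding n_reached_def by (simp add: sum.swap[of _ Y] sum_distrib_left if_distrib cong: if_cong)
  finally show ?thesis .
qed

lemma potential_union:
  assumes X: "down_closed X" and Y: "down_closed Y" and disj: "X \<inter> Y = {}"
  shows "potential (X \<union> Y) = potential X + potential Y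
    + 2 * (\<Sum>l\<in>X. \<epsilon> l * n_reached Y (Suc (\<rho> l))) + 2 * (\<Sum>l\<in>Y. \<epsilon> l * n_reached X (Suc (\<rho> l)))"
proof -
  have fin: "finite X" "finite Y" using X Y by (simp_all add: down_closed_def)
  have reached: "n_reached (X \<union> Y) t = n_reached X t + n_reached Y t" for t
    unfolding n_reached_def using sum.union_disjoint fin disj by blast
  have above: "n_above (X \<union> Y) l = n_above X l + n_above Y l" for l
    unfolding n_above_def using sum.union_disjoint fin disj by blast
  have above_other: "n_above Z l = 0" if "down_closed Z" "l \<notin> Z" for Z l
  proof -
    have "\<forall>f\<in>Z. l \<notin> subtree f" using that by (auto simp: down_closed_def)
    then show ?thesis by (simp add: n_above_def)
  qed
  have "(\<Sum>l\<in>X. \<epsilon> l * (2 * n_reached (X \<union> Y) (Suc (\<rho> l)) - n_above (X \<union> Y) l))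
      = (\<Sum>l\<in>X. \<epsilon> l * (2 * n_reached X (Suc (\<rho> l)) - n_above X l) + 2 * (\<epsilon> l * n_reached Y (Suc (\<rho> l))))"
    using above_other[OF Y] disj by (intro sum.cong) (auto simp: reached above algebra_simps)
  moreover have "(\<Sum>l\<in>Y. \<epsilon> l * (2 * n_reached (X \<union> Y) (Suc (\<rho> l)) - n_above (X \<union> Y) l))
      = (\<Sum>l\<in>Y. \<epsilon> l * (2 * n_reached Y (Suc (\<rho> l)) - n_above Y l) + 2 * (\<epsilon> l * n_reached X (Suc (\<rho> l))))"
    using above_other[OF X] disj by (intro sum.cong) (auto simp: reached above algebra_simps)
  ultimately show ?thesis
    unfolding potential_def by (simp add: sum.union_disjoint[OF fin disj] sum.distrib sum_distrib_left)
qed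

lemma balanced_union:
  assumes X: "down_closed X" and Y: "down_closed Y" and disj: "X \<inter> Y = {}"
    and bal: "balanced c X" "balanced c Y" and c: "c \<ge> 0"
  shows "balanced c (X \<union> Y)"
proof -
  have fin: "finite X" "X \<subseteq> E" "finite Y" "Y \<subseteq> E" using X Y by (auto simp: down_closed_def)
  have mX: "mass X = c * real (card X)" and eX: "\<forall>t. early_mass X t \<le> c * n_reached X t"
    and pX: "c * real (card X) ^ 2 \<le> potential X"
    and mY: "mass Y = c * real (card Y)" and eY: "\<forall>t. early_mass Y t \<le> c * n_reached Y t"
    and pY: "c * real (card Y) ^ 2 \<le> potential Y"
    using bal by (auto simp: balanced_def)
  have card: "card (X \<union> Y) = card X + card Y" using card_Un_disjoint fin disj by blast
  have "c * (real (card X) * real (card Y))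
      \<le> (\<Sum>l\<in>X. \<epsilon> l * n_reached Y (Suc (\<rho> l))) + (\<Sum>l\<in>Y. \<epsilon> l * n_reached X (Suc (\<rho> l)))"
    using mult_left_mono[OF card_times_card_le_comparisons[of X Y min_rank] c]
      cross_potential_lower[OF fin(1,2,3) eX mX] cross_potential_lower[OF fin(3,4,1) eY mY]
    by (simp add: algebra_simps)
  then have "c * real (card (X \<union> Y)) ^ 2 \<le> potential (X \<union> Y)"
    using potential_union[OF X Y disj] pX pY unfolding card
    by (simp add: power2_eq_square algebra_simps)
  moreover have "mass (X \<union> Y) = c * real (card (X \<union> Y))"
    using mX mY card sum.union_disjoint[of X Y \<epsilon>] fin disj by (simp add: mass_def algebra_simps)
  moreover have "early_mass (X \<union> Y) t \<le> c * n_reached (X \<union> Y) t" for t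
  proof -
    have "early_mass (X \<union> Y) t = early_mass X t + early_mass Y t"
      "n_reached (X \<union> Y) t = n_reached X t + n_reached Y t"
      unfolding early_mass_def n_reached_def using sum.union_disjoint fin disj by blast+
    moreover have "early_mass X t + early_mass Y t \<le> c * n_reached X t + c * n_reached Y t"
      using eX eY by (intro add_mono) auto
    ultimately show ?thesis by (simp add: distrib_left)
  qed
  ultimately show ?thesis by (simp add: balanced_def)
qed

lemma down_closed_Un: "down_closed X \<Longrightarrow> down_closed Y \<Longrightarrow> down_closed (X \<union> Y)"
  by (auto simp: down_closed_def)

lemma balanced_leaf:
  assumes "g \<in> E" "leaf g"
  shows "balanced (\<epsilon> g) {g}"
  using min_rank_leaf[OF assms] subtree_self[of g]
  by (simp add: balanced_def mass_def early_mass_def n_reached_def potential_def n_above_def)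

lemma balanced_children:
  assumes c: "c \<ge> 0" and bal: "\<forall>f\<in>out v. balanced c (subtree f)"
  shows "down_closed (\<Union>(subtree ` out v)) \<and> balanced c (\<Union>(subtree ` out v))"
proof -
  have "down_closed (\<Union>(subtree ` F)) \<and> balanced c (\<Union>(subtree ` F))"
    if "finite F" "F \<subseteq> out v" for F
    using that
  proof (induction F rule: finite_induct)
    case empty
    then show ?case
      by (simp add: down_closed_def balanced_def mass_def early_mass_def n_reached_def potential_def)
  next
    case (insert f F)
    have f: "f \<in> out v" "f \<in> E" using insert(4) out_edges_iff by auto
    have disj: "subtree f \<inter> \<Union>(subtree ` F) = {}"
      using sibling_subtrees_disjoint[OF f(1)] insert(2,4) by blast
    have IH: "down_closed (\<Union>(subtree ` F))" "balanced c (\<Union>(subtree ` F))"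
      using insert(3,4) by auto
    show ?case
      using down_closed_Un[OF down_closed_subtree[OF f(2)] IH(1)]
        balanced_union[OF down_closed_subtree[OF f(2)] IH(1) disj _ IH(2) c] bal f(1) by simp
  qed
  then show ?thesis using finite_out_edges by blast
qed

lemma min_rank_le_charged:
  assumes "g \<in> E" "l \<in> subtree g" "\<epsilon> l \<noteq> 0"
  shows "min_rank g \<le> \<rho> l"
  using assms density_nonleaf subtree_subset_E min_rank_le by blast

context
  fixes g :: "'a set" and U :: "'a set set"
  assumes g: "g \<in> E" "\<not> leaf g" and U: "U = \<Union>(subtree ` out (head g))"
begin

lemma subtree_nonleaf: "subtree g = insert g U" "g \<notin> U" "finite U" "U \<subseteq> E"
  using subtree_decomp[OF g(1)] finite_subtree[OF g(1)] subtree_subset_E[OF g(1)] unfolding U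
  by auto

lemma n_reached_subtree_nonleaf:
  "n_reached (subtree g) t = (if min_rank g < t then 1 else 0) + n_reached U t"
  using subtree_nonleaf by (simp add: n_reached_def)

lemma potential_subtree_nonleaf: "potential (subtree g) = potential U + mass U"
proof -
  have "\<epsilon> l * (2 * n_reached (subtree g) (Suc (\<rho> l)) - n_above (subtree g) l)
      = \<epsilon> l * (2 * n_reached U (Suc (\<rho> l)) - n_above U l) + \<epsilon> l" if l: "l \<in> U" for l
  proof (cases "\<epsilon> l = 0")
    case False
    have "min_rank g \<le> \<rho> l"
      using min_rank_le_charged[OF g(1) _ False] l subtree_nonleaf(1) by blast
    moreover have "n_above (subtree g) l = 1 + n_above U l"
      using subtree_nonleaf l subtree_self by (simp add: n_above_def)
    ultimately show ?thesis by (simp add: n_reached_subtree_nonleaf algebra_simps)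
  qed simp
  then have "potential (subtree g) = (\<Sum>l\<in>U. \<epsilon> l * (2 * n_reached U (Suc (\<rho> l)) - n_above U l) + \<epsilon> l)"
    unfolding potential_def using subtree_nonleaf density_nonleaf[OF g] by simp
  then show ?thesis unfolding potential_def mass_def by (simp add: sum.distrib)
qed

lemma mass_card_subtree_nonleaf:
  "mass (subtree g) = mass U" "card (subtree g) = card U + 1"
  using subtree_nonleaf density_nonleaf[OF g] by (simp_all add: mass_def)

lemma early_mass_subtree_nonleaf:
  assumes bal: "balanced c U"
  shows "early_mass (subtree g) t \<le> mass U / (real (card U) + 1) * n_reached (subtree g) t"
proof -
  have early_eq: "early_mass (subtree g) t = early_mass U t"
    using subtree_nonleaf density_nonleaf[OF g] by (simp add: early_mass_def)
  show ?thesis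
  proof (cases "\<exists>l\<in>U. \<rho> l < t \<and> \<epsilon> l \<noteq> 0")
    case True
    then obtain l where l: "l \<in> U" "\<rho> l < t" "\<epsilon> l \<noteq> 0" by blast
    have "min_rank g \<le> \<rho> l"
      using min_rank_le_charged[OF g(1) _ l(3)] l(1) subtree_nonleaf(1) by blast
    then have reached: "n_reached (subtree g) t = 1 + n_reached U t"
      using l(2) by (simp add: n_reached_subtree_nonleaf)
    have "early_mass U t \<le> mass U"
      unfolding mass_def early_mass_def using subtree_nonleaf(4) density_nonneg
      by (auto intro!: sum_mono)
    moreover have "early_mass U t * real (card U) \<le> c * n_reached U t * real (card U)"
      using bal by (simp add: balanced_def mult_right_mono)
    then have "early_mass U t * real (card U) \<le> mass U * n_reached U t"
      using bal by (simp add: balanced_def algebra_simps)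
    ultimately have "early_mass U t * (real (card U) + 1) \<le> mass U * (1 + n_reached U t)"
      by (simp add: algebra_simps)
    then show ?thesis unfolding early_eq reached by (simp add: field_simps)
  next
    case False
    then have "early_mass U t = 0" unfolding early_mass_def by (intro sum.neutral) auto
    moreover have "mass U \<ge> 0" "n_reached U t \<ge> 0"
      unfolding n_reached_def using mass_nonneg[OF subtree_nonleaf(4)] by (auto intro: sum_nonneg)
    ultimately show ?thesis by (simp add: early_eq n_reached_subtree_nonleaf)
  qed
qed

text \<open>The new density is \<open>c' = c |U| / (|U| + 1)\<close>, and the potential grows by \<open>mass U = c |U|\<close>,
  exactly the growth of \<open>c' |X|\<^sup>2\<close>.\<close>
lemma balanced_subtree_nonleaf:
  assumes bal: "balanced c U"
  shows "balanced (mass (subtree g) / real (card (subtree g))) (subtree g)"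
proof -
  have mU: "mass U = c * real (card U)" and pU: "c * real (card U) ^ 2 \<le> potential U"
    using bal unfolding balanced_def by auto
  define c' where "c' = mass U / (real (card U) + 1)"
  have c': "mass (subtree g) / real (card (subtree g)) = c'"
    unfolding c'_def mass_card_subtree_nonleaf by simp
  have "c' * real (card (subtree g)) ^ 2 = c * real (card U) ^ 2 + mass U"
    unfolding c'_def mass_card_subtree_nonleaf using mU by (simp add: power2_eq_square field_simps)
  then have "c' * real (card (subtree g)) ^ 2 \<le> potential (subtree g)"
    using pU potential_subtree_nonleaf by simp
  moreover have "mass (subtree g) = c' * real (card (subtree g))"
    unfolding c'_def mass_card_subtree_nonleaf by (simp add: field_simps)
  ultimately show ?thesis
    using early_mass_subtree_nonleaf[OF bal, folded c'_def] unfolding c' balanced_def by blast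
qed

end

lemma balanced_subtree: "g \<in> E \<Longrightarrow> balanced (mass (subtree g) / real (card (subtree g))) (subtree g)"
proof (induction "card (subtree g)" arbitrary: g rule: less_induct)
  case less
  show ?case
  proof (cases "leaf g")
    case True
    then show ?thesis using balanced_leaf less(2) leaf_subtree by (simp add: mass_def)
  next
    case False
    define v where "v = head g"
    have v: "v \<in> V" using head_in[OF less(2)] less(2) edges_subset_Pow unfolding v_def by blast
    obtain f0 where f0: "f0 \<in> out v" using False unfolding v_def leaf_edge_def by blast
    define c where "c = mass (subtree f0) / real (card (subtree f0))"
    have "c \<ge> 0"
      unfolding c_def using mass_nonneg subtree_subset_E f0 out_edges_iff by simp
    moreover have "balanced c (subtree f)" if f: "f \<in> out v" for f
      using less(1)[OF card_child_subtree_less[OF less(2)]] f out_edges_iff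
        sibling_density_eq[OF v f0 f] unfolding c_def v_def by simp
    ultimately show ?thesis
      using balanced_children balanced_subtree_nonleaf[OF less(2) False refl] unfolding v_def by blast
  qed
qed

lemma card_le_potential:
  assumes "E \<noteq> {}"
  shows "real (card E) \<le> potential E"
proof -
  obtain f0 where f0: "f0 \<in> out r" using assms edge_in_root_subtree by blast
  define c where "c = mass (subtree f0) / real (card (subtree f0))"
  have "c \<ge> 0" unfolding c_def using mass_nonneg subtree_subset_E f0 out_edges_iff by simp
  moreover have "balanced c (subtree f)" if f: "f \<in> out r" for f
    using balanced_subtree f out_edges_iff sibling_density_eq[OF root_in_V f0 f] unfolding c_def
    by simp
  ultimately have "balanced c E" using balanced_children edges_decomp by metis
  then have "c * real (card E) = 1" "c * real (card E) ^ 2 \<le> potential E"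
    using density_sum unfolding balanced_def mass_def by simp_all
  then show ?thesis by (simp add: power2_eq_square mult.assoc[symmetric])
qed

end

section \<open>The hider's lower bound\<close>

definition n_traversals :: "(nat \<Rightarrow> 'v) \<Rightarrow> 'v set \<Rightarrow> nat \<Rightarrow> nat" where
  "n_traversals w f t = card {s. s < t \<and> traverses_at w f s}"

lemma n_traversals_0: "n_traversals w f 0 = 0"
  by (simp add: n_traversals_def)

lemma n_traversals_Suc:
  "n_traversals w f (Suc t) = n_traversals w f t + (if traverses_at w f t then 1 else 0)"
proof -
  have "{s. s < Suc t \<and> traverses_at w f s}
      = (if traverses_at w f t then insert t else id) {s. s < t \<and> traverses_at w f s}"
    by (auto simp: less_Suc_eq)
  then show ?thesis by (simp add: n_traversals_def)
qed

lemma n_traversals_mono: "t \<le> t' \<Longrightarrow> n_traversals w f t \<le> n_traversals w f t'"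
  unfolding n_traversals_def by (rule card_mono) auto

lemma sum_n_traversals_le: "finite S \<Longrightarrow> (\<Sum>f\<in>S. n_traversals w f t) \<le> t"
proof -
  assume "finite S"
  then have "(\<Sum>f\<in>S. n_traversals w f t) = card (\<Union>f\<in>S. {s. s < t \<and> traverses_at w f s})"
    unfolding n_traversals_def
    by (intro card_UN_disjoint[symmetric]) (auto simp: traverses_at_def)
  also have "\<dots> \<le> card {..<t}" by (rule card_mono) auto
  finally show ?thesis by simp
qed

definition traversed :: "(nat \<Rightarrow> 'v) \<Rightarrow> 'v set \<Rightarrow> bool" where
  "traversed w e \<longleftrightarrow> (\<exists>t. traverses_at w e t)"

definition first_traversal :: "(nat \<Rightarrow> 'v) \<Rightarrow> 'v set \<Rightarrow> nat" where
  "first_traversal w e = (LEAST t. traverses_at w e t)"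

lemma traverses_at_first_traversal: "traversed w e \<Longrightarrow> traverses_at w e (first_traversal w e)"
  unfolding traversed_def first_traversal_def by (metis LeastI)

lemma first_traversal_le: "traverses_at w e t \<Longrightarrow> first_traversal w e \<le> t"
  unfolding first_traversal_def by (rule Least_le)

lemma n_traversals_first_traversal: "n_traversals w e (Suc (first_traversal w e)) = 1"
  if "traversed w e"
proof -
  have "{s. s < first_traversal w e \<and> traverses_at w e s} = {}"
    using first_traversal_le by force
  then show ?thesis
    using traverses_at_first_traversal[OF that] unfolding n_traversals_Suc
    by (simp add: n_traversals_def)
qed

lemma hit_time_traversed: "traversed w e \<Longrightarrow> hit_time w e = of_nat (Suc (first_traversal w e))"
  by (simp add: hit_time_def traversed_def first_traversal_def)

lemma hit_time_not_traversed: "\<not> traversed w e \<Longrightarrow> hit_time w e = \<infinity>"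
  by (simp add: hit_time_def traversed_def)

context rooted_tree
begin

lemma odd_n_traversals_iff:
  assumes w: "walk E r w" and f: "f \<in> E"
  shows "odd (n_traversals w f t) \<longleftrightarrow> w t \<notin> root_comp f"
proof (induction t)
  case 0
  then show ?case using w root_in_root_comp by (simp add: walk_def n_traversals_0)
next
  case (Suc t)
  show ?case
  proof (cases "traverses_at w f t")
    case True
    then have "w t \<in> root_comp f \<longleftrightarrow> w (Suc t) \<notin> root_comp f"
      using endpoints_separated[OF f] by (auto simp: traverses_at_def)
    then show ?thesis using Suc True by (simp add: n_traversals_Suc)
  next
    case False
    have "w (Suc t) \<in> root_comp f \<longleftrightarrow> w t \<in> root_comp f"
    proof (cases "w (Suc t) = w t")
      case False
      then have e: "{w t, w (Suc t)} \<in> E" using w unfolding walk_def by metis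
      moreover have "{w t, w (Suc t)} \<noteq> f"
        using \<open>\<not> traverses_at w f t\<close> False by (auto simp: traverses_at_def)
      ultimately show ?thesis using root_comp_edge_closed by blast
    qed simp
    then show ?thesis using Suc False by (simp add: n_traversals_Suc)
  qed
qed

lemma head_after_first_traversal:
  assumes w: "walk E r w" and l: "l \<in> E" and "traversed w l"
  shows "w (Suc (first_traversal w l)) = head l"
proof -
  have "w (Suc (first_traversal w l)) \<notin> root_comp l"
    using odd_n_traversals_iff[OF w l, of "Suc (first_traversal w l)"]
      n_traversals_first_traversal[OF assms(3)] by simp
  moreover have "w (Suc (first_traversal w l)) \<in> l"
    using traverses_at_first_traversal[OF assms(3)] by (auto simp: traverses_at_def)
  ultimately show ?thesis using endpoint_not_in_root_comp[OF l] by blast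
qed

definition rank_bound :: "(nat \<Rightarrow> 'a) \<Rightarrow> nat" where
  "rank_bound w = Suc (Max (insert 0 (first_traversal w ` {e \<in> E. traversed w e})))"

lemma first_traversal_less_rank_bound:
  "e \<in> E \<Longrightarrow> traversed w e \<Longrightarrow> first_traversal w e < rank_bound w"
  unfolding rank_bound_def using finite_E by (simp add: le_imp_less_Suc)

definition hit_rank :: "(nat \<Rightarrow> 'a) \<Rightarrow> 'a set \<Rightarrow> nat" where
  "hit_rank w e = (if traversed w e then first_traversal w e else rank_bound w)"

end

locale walk_against_density = rooted_tree +
  fixes \<epsilon> :: "'a set \<Rightarrow> real" and w :: "nat \<Rightarrow> 'a"
  assumes equal_branching: "equal_branching_density V E r \<epsilon>" and walk: "walk E r w"

sublocale walk_against_density \<subseteq> ranked_equal_branching V E r \<epsilon> "hit_rank w"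
  by unfold_locales (rule equal_branching)

context walk_against_density
begin

text \<open>Both bounds come from parity: on reaching the head of a leaf below \<open>f\<close> the walk is beyond
  \<open>f\<close>, while at time \<open>Suc (first_traversal w l)\<close> it stands at the head of \<open>l\<close>, which is on the
  root side of \<open>f\<close> unless \<open>l\<close> is below \<open>f\<close>.\<close>
lemma n_traversals_reached_edge:
  assumes l: "l \<in> E" "traversed w l" and f: "f \<in> E"
    and reached: "min_rank f \<le> first_traversal w l"
  shows "n_traversals w f (Suc (first_traversal w l)) \<ge> (if l \<in> subtree f then 1 else 2)"
proof -
  define i where "i = first_traversal w l"
  obtain l' where l': "l' \<in> subtree f" "leaf l'" "hit_rank w l' = min_rank f"
    using min_rank_attained[OF f] by blast
  have l'E: "l' \<in> E" using l' subtree_subset_E[OF f] by blast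
  have "traversed w l'"
    using l' reached first_traversal_less_rank_bound[OF l] unfolding hit_rank_def i_def
    by (auto split: if_splits)
  then have "first_traversal w l' \<le> i" using l'(3) reached by (simp add: hit_rank_def i_def)
  moreover have "odd (n_traversals w f (Suc (first_traversal w l')))"
    using head_after_first_traversal[OF walk l'E \<open>traversed w l'\<close>]
      mem_subtree_iff_head[OF l'E f] l'(1) odd_n_traversals_iff[OF walk f] by simp
  then have "n_traversals w f (Suc (first_traversal w l')) \<ge> 1" by (simp add: odd_pos Suc_leI)
  ultimately have once: "n_traversals w f (Suc i) \<ge> 1"
    using n_traversals_mono[of "Suc (first_traversal w l')" "Suc i" w f] by simp
  show ?thesis
  proof (cases "l \<in> subtree f")
    case False
    then have "even (n_traversals w f (Suc i))"
      using odd_n_traversals_iff[OF walk f, of "Suc i"] mem_subtree_iff_head[OF l(1) f]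
        head_after_first_traversal[OF walk l] unfolding i_def by simp
    then have "n_traversals w f (Suc i) \<noteq> 1" by (metis odd_one)
    then show ?thesis using once False unfolding i_def by simp
  qed (use once i_def in simp)
qed

lemma charge_le_hit_time:
  assumes l: "l \<in> E" "traversed w l"
  shows "2 * n_reached E (Suc (hit_rank w l)) - n_above E l \<le> real (Suc (first_traversal w l))"
proof -
  define i where "i = first_traversal w l"
  define b where "b f = (if min_rank f < Suc i then (if l \<in> subtree f then 1 else 2) else 0 :: nat)" for f
  have "b f \<le> n_traversals w f (Suc i)" if "f \<in> E" for f
    using n_traversals_reached_edge[OF l that] unfolding b_def i_def by auto
  then have "(\<Sum>f\<in>E. b f) \<le> (\<Sum>f\<in>E. n_traversals w f (Suc i))" by (rule sum_mono)
  also have "\<dots> \<le> Suc i" by (rule sum_n_traversals_le[OF finite_E])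
  finally have sum_b: "real (\<Sum>f\<in>E. b f) \<le> real (Suc i)" by linarith
  have "2 * n_reached E (Suc (hit_rank w l)) - n_above E l
      = (\<Sum>f\<in>E. 2 * (if min_rank f < Suc i then 1 else 0) - (if l \<in> subtree f then 1 else 0 :: real))"
    unfolding n_reached_def n_above_def hit_rank_def i_def using l(2)
    by (simp add: sum_subtractf sum_distrib_left)
  also have "\<dots> \<le> (\<Sum>f\<in>E. real (b f))" by (rule sum_mono) (auto simp: b_def)
  finally show ?thesis using sum_b unfolding i_def by simp
qed

lemma charge_nonneg:
  assumes "l \<in> E"
  shows "\<epsilon> l * (2 * n_reached E (Suc (hit_rank w l)) - n_above E l) \<ge> 0"
proof (cases "leaf l")
  case True
  have "n_above E l \<le> n_reached E (Suc (hit_rank w l))"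
    unfolding n_above_def n_reached_def using min_rank_le[OF _ _ True]
    by (intro sum_mono) (auto simp: less_Suc_eq_le)
  moreover have "0 \<le> n_reached E (Suc (hit_rank w l))"
    unfolding n_reached_def by (rule sum_nonneg) auto
  ultimately show ?thesis using density_nonneg[OF assms] by simp
qed (simp add: density_nonleaf[OF assms])

lemma card_le_weighted_hit_time:
  assumes "E \<noteq> {}"
  shows "of_nat (card E) \<le> (\<Sum>e\<in>E. ennreal (\<epsilon> e) * hit_time w e)"
proof (cases "\<exists>e\<in>E. \<epsilon> e > 0 \<and> \<not> traversed w e")
  case True
  then obtain e where e: "e \<in> E" "\<epsilon> e > 0" "\<not> traversed w e" by blast
  then have "ennreal (\<epsilon> e) * hit_time w e = \<infinity>"
    by (simp add: hit_time_not_traversed ennreal_mult_top)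
  moreover have "ennreal (\<epsilon> e) * hit_time w e \<le> (\<Sum>e\<in>E. ennreal (\<epsilon> e) * hit_time w e)"
    by (rule member_le_sum[OF e(1)]) (auto simp: finite_E)
  ultimately show ?thesis by (simp add: top_unique)
next
  case False
  define charge where "charge e = \<epsilon> e * (2 * n_reached E (Suc (hit_rank w e)) - n_above E e)" for e
  have "ennreal (charge e) \<le> ennreal (\<epsilon> e) * hit_time w e" if e: "e \<in> E" for e
  proof (cases "\<epsilon> e = 0")
    case False
    then have pos: "\<epsilon> e > 0" and tr: "traversed w e"
      using density_nonneg[OF e] \<open>\<not> (\<exists>e\<in>E. 0 < \<epsilon> e \<and> \<not> traversed w e)\<close> e by auto
    have "charge e \<le> \<epsilon> e * real (Suc (first_traversal w e))"
      unfolding charge_def using charge_le_hit_time[OF e tr] pos by (intro mult_left_mono) auto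
    then have "ennreal (charge e) \<le> ennreal (\<epsilon> e * real (Suc (first_traversal w e)))"
      by (rule ennreal_leI)
    also have "\<dots> = ennreal (\<epsilon> e) * hit_time w e"
      using pos by (simp add: hit_time_traversed[OF tr] ennreal_mult ennreal_of_nat_eq_real_of_nat)
    finally show ?thesis .
  qed (simp add: charge_def)
  then have "(\<Sum>e\<in>E. ennreal (charge e)) \<le> (\<Sum>e\<in>E. ennreal (\<epsilon> e) * hit_time w e)"
    by (rule sum_mono)
  moreover have "of_nat (card E) \<le> ennreal (potential E)"
    using card_le_potential[OF assms] by (simp add: ennreal_of_nat_eq_real_of_nat)
  moreover have "ennreal (potential E) = (\<Sum>e\<in>E. ennreal (charge e))"
    unfolding potential_def charge_def using charge_nonneg by simp
  ultimately show ?thesis by simp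
qed

end

section \<open>Searching along closed walks\<close>

context connected_rooted_graph
begin

definition closed_walk :: "'v \<Rightarrow> 'v list \<Rightarrow> bool" where
  "closed_walk c xs \<longleftrightarrow> xs \<noteq> [] \<and> hd xs = c \<and> last xs = c \<and> walk_edges xs \<subseteq> E"

lemma closed_cover_walk_iff: "closed_cover_walk E r xs \<longleftrightarrow> closed_walk r xs \<and> E \<subseteq> walk_edges xs"
proof -
  have "(\<forall>i. Suc i < length xs \<longrightarrow> {xs ! i, xs ! Suc i} \<in> E) \<longleftrightarrow> walk_edges xs \<subseteq> E"
    "(\<forall>e\<in>E. \<exists>i. Suc i < length xs \<and> {xs ! i, xs ! Suc i} = e) \<longleftrightarrow> E \<subseteq> walk_edges xs"
    unfolding walk_edges_conv_nth by auto
  then show ?thesis unfolding closed_cover_walk_def closed_walk_def by blast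
qed

lemma closed_walk_rev: "closed_walk c xs \<Longrightarrow> closed_walk c (rev xs)"
  unfolding closed_walk_def by (simp add: walk_edges_rev hd_rev last_rev)

lemma closed_walk_set_subset:
  assumes "c \<in> V" "closed_walk c xs"
  shows "set xs \<subseteq> V"
proof
  fix y assume "y \<in> set xs"
  then obtain k where k: "k < length xs" "xs ! k = y" by (meson in_set_conv_nth)
  show "y \<in> V"
  proof (cases k)
    case 0
    then show ?thesis using assms k by (auto simp: closed_walk_def hd_conv_nth[symmetric])
  next
    case (Suc j)
    then have "{xs ! j, xs ! Suc j} \<in> E"
      using assms(2) k unfolding closed_walk_def walk_edges_conv_nth by blast
    then show ?thesis using edges_subset_Pow k Suc by blast
  qed
qed

lemma uncovered_edge_at_walk:
  assumes c: "c \<in> V" and Z: "closed_walk c Z" and "\<not> E \<subseteq> walk_edges Z"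
  shows "\<exists>g\<in>E - walk_edges Z. \<exists>a\<in>g. a \<in> set Z"
proof -
  obtain g0 where g0: "g0 \<in> E" "g0 \<notin> walk_edges Z" using assms(3) by blast
  obtain u v where uv: "g0 = {u, v}" "u \<in> V" by (rule edgeE[OF g0(1)])
  have "y \<in> set Z \<or> (\<exists>g\<in>E - walk_edges Z. \<exists>a\<in>g. a \<in> set Z)" if "(c, y) \<in> (adj E)\<^sup>*" for y
    using that
  proof (induction rule: rtrancl_induct)
    case base
    then show ?case using Z hd_in_set[of Z] by (simp add: closed_walk_def)
  next
    case (step y z)
    have yz: "{y, z} \<in> E" using step(2) by (simp add: adj_def)
    from step(3) show ?case
    proof
      assume y: "y \<in> set Z"
      show ?thesis
      proof (cases "{y, z} \<in> walk_edges Z")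
        case True
        then show ?thesis using walk_edges_vertex[of "{y, z}" Z z] by blast
      qed (use yz y in blast)
    qed blast
  qed
  then consider "u \<in> set Z" | "\<exists>g\<in>E - walk_edges Z. \<exists>a\<in>g. a \<in> set Z"
    using rtrancl_adj_connected[OF c uv(2)] by blast
  then show ?thesis
  proof cases
    case 1
    moreover have "g0 \<in> E - walk_edges Z" "u \<in> g0" using g0 uv(1) by simp_all
    ultimately show ?thesis by blast
  qed simp
qed

lemma closed_walk_detour:
  assumes Z: "closed_walk c Z" and g: "g \<in> E" "a \<in> g" "a \<in> set Z"
  obtains Z' where "closed_walk c Z'" "walk_edges Z' = insert g (walk_edges Z)"
    "length Z' = length Z + 2"
proof -
  obtain b where b: "g = {a, b}" "a \<noteq> b" using edge_other_endpoint[OF g(1,2)] by blast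
  obtain as bs where ab: "Z = as @ a # bs" using g(3) by (meson split_list)
  define Z' where "Z' = as @ a # b # a # bs"
  have "walk_edges Z' = walk_edges (as @ [a]) \<union> walk_edges (a # b # a # bs)"
    unfolding Z'_def by (rule walk_edges_append)
  moreover have "walk_edges Z = walk_edges (as @ [a]) \<union> walk_edges (a # bs)"
    unfolding ab by (rule walk_edges_append)
  moreover have "walk_edges (a # b # a # bs) = insert {a, b} (walk_edges (a # bs))"
    by (auto simp: insert_commute)
  ultimately have edges: "walk_edges Z' = insert g (walk_edges Z)" using b(1) by auto
  have "hd Z' = hd Z" unfolding Z'_def ab by (cases as) auto
  moreover have "last Z' = last Z" unfolding Z'_def ab by (cases bs) auto
  ultimately have "closed_walk c Z'" using Z edges g(1) unfolding closed_walk_def by auto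
  moreover have "length Z' = length Z + 2" unfolding Z'_def ab by simp
  ultimately show ?thesis using that edges by blast
qed

text \<open>Every uncovered edge is added by a detour of length 2.\<close>
lemma closed_walk_extend_to_cover:
  assumes c: "c \<in> V" and Z: "closed_walk c Z"
  obtains W where "closed_walk c W" "E \<subseteq> walk_edges W"
    "length W \<le> length Z + 2 * card (E - walk_edges Z)"
proof -
  have "\<exists>W. closed_walk c W \<and> E \<subseteq> walk_edges W \<and> length W \<le> length Z + 2 * card (E - walk_edges Z)"
    using Z
  proof (induction "card (E - walk_edges Z)" arbitrary: Z rule: less_induct)
    case less
    show ?case
    proof (cases "E \<subseteq> walk_edges Z")
      case False
      obtain g a where g: "g \<in> E - walk_edges Z" "a \<in> g" "a \<in> set Z"
        using uncovered_edge_at_walk[OF c less(2) False] by blast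
      obtain Z' where Z': "closed_walk c Z'" "walk_edges Z' = insert g (walk_edges Z)"
        "length Z' = length Z + 2"
        using closed_walk_detour[OF less(2), of g a] g by blast
      have "E - walk_edges Z' = (E - walk_edges Z) - {g}" using Z'(2) by auto
      then have "card (E - walk_edges Z') = card (E - walk_edges Z) - 1"
        "card (E - walk_edges Z) > 0"
        using g(1) finite_E by (auto simp: card_gt_0_iff)
      then obtain W where "closed_walk c W" "E \<subseteq> walk_edges W"
        "length W \<le> length Z' + 2 * card (E - walk_edges Z')"
        using less(1)[OF _ Z'(1)] by auto
      then show ?thesis using Z'(3) \<open>card (E - walk_edges Z) > 0\<close> \<open>card (E - walk_edges Z') = _\<close>
        by (intro exI[of _ W]) auto
    qed (use less(2) in \<open>intro exI[of _ Z], simp\<close>)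
  qed
  then show ?thesis using that by blast
qed

lemma closed_walk_rotate:
  assumes W: "closed_walk c W" and x: "x \<in> set W"
  obtains W' where "closed_walk x W'" "walk_edges W' = walk_edges W" "length W' = length W"
proof -
  obtain as bs where ab: "W = as @ x # bs" using x by (meson split_list)
  show ?thesis
  proof (cases "as = []")
    case True
    then have "x = c" using W ab by (simp add: closed_walk_def)
    then show ?thesis using W that by blast
  next
    case False
    have c: "hd as = c" "last (x # bs) = c" using W ab False by (simp_all add: closed_walk_def)
    define W' where "W' = (x # bs) @ (tl as @ [x])"
    have "walk_edges W' = walk_edges (x # bs) \<union> (walk_edges (tl as @ [x]) \<union> {{c, hd (tl as @ [x])}})"
      unfolding W'_def using walk_edges_append_nonempty[of "x # bs" "tl as @ [x]"] c(2) by auto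
    also have "walk_edges (tl as @ [x]) \<union> {{c, hd (tl as @ [x])}} = walk_edges (c # tl as @ [x])"
      by (simp add: walk_edges_Cons)
    also have "c # tl as @ [x] = as @ [x]" using c(1) False by (cases as) simp_all
    finally have edges_W': "walk_edges W' = walk_edges (x # bs) \<union> walk_edges (as @ [x])" .
    moreover have edges_W: "walk_edges W = walk_edges (as @ [x]) \<union> walk_edges (x # bs)"
      unfolding ab by (rule walk_edges_append)
    moreover have "length W' = length W" unfolding W'_def ab using False by simp
    moreover have "closed_walk x W'"
      using assms(1) edges_W' edges_W unfolding closed_walk_def W'_def by auto
    ultimately show ?thesis using that by (simp add: sup_commute)
  qed
qed

lemma root_on_edge:
  assumes "E \<noteq> {}"
  shows "\<exists>e\<in>E. r \<in> e"
proof -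
  obtain e where e: "e \<in> E" using assms by blast
  obtain a b where ab: "e = {a, b}" "a \<in> V" by (rule edgeE[OF e])
  show ?thesis
  proof (cases "a = r")
    case True then show ?thesis using e ab by blast
  next
    case False
    have "(r, a) \<in> (adj E)\<^sup>*" by (rule rtrancl_adj_connected[OF root_in_V ab(2)])
    then have "\<exists>y. (r, y) \<in> adj E"
    proof (cases rule: converse_rtranclE)
      case base then show ?thesis using False by simp
    next
      case (step y) then show ?thesis by blast
    qed
    then obtain y where "{r, y} \<in> E" by (auto simp: adj_def)
    then show ?thesis by blast
  qed
qed

end

context connected_rooted_graph
begin

lemma follow_tour_end:
  assumes "closed_walk r xs" "\<not> Suc t < length xs"
  shows "follow_tour r xs t = r" "follow_tour r xs (Suc t) = r"
proof -
  show "follow_tour r xs t = r"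
  proof (cases "t < length xs")
    case True
    then have "t = length xs - 1" using assms(2) by simp
    moreover have "xs \<noteq> []" "last xs = r" using assms(1) by (auto simp: closed_walk_def)
    ultimately show ?thesis using True by (simp add: follow_tour_def last_conv_nth)
  qed (simp add: follow_tour_def)
  show "follow_tour r xs (Suc t) = r" using assms(2) by (simp add: follow_tour_def)
qed

definition traverses_list_at :: "'v list \<Rightarrow> 'v set \<Rightarrow> nat \<Rightarrow> bool" where
  "traverses_list_at xs e i \<longleftrightarrow> Suc i < length xs \<and> xs ! i \<noteq> xs ! Suc i \<and> {xs ! i, xs ! Suc i} = e"

lemma traverses_at_follow_tour:
  assumes "closed_walk r xs"
  shows "traverses_at (follow_tour r xs) e t \<longleftrightarrow> traverses_list_at xs e t"
proof (cases "Suc t < length xs")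
  case True
  then show ?thesis by (simp add: traverses_at_def traverses_list_at_def follow_tour_def)
next
  case False
  then show ?thesis
    using follow_tour_end[OF assms] by (simp add: traverses_at_def traverses_list_at_def)
qed

lemma walk_follow_tour:
  assumes W: "closed_walk r xs"
  shows "walk E r (follow_tour r xs)"
proof -
  have "follow_tour r xs (Suc t) = follow_tour r xs t \<or> {follow_tour r xs t, follow_tour r xs (Suc t)} \<in> E"
    for t
  proof (cases "Suc t < length xs")
    case True
    then have "{xs ! t, xs ! Suc t} \<in> E"
      using W unfolding closed_walk_def walk_edges_conv_nth by blast
    then show ?thesis using True by (simp add: follow_tour_def)
  qed (simp add: follow_tour_end[OF W])
  moreover have "follow_tour r xs 0 = r"
    using W by (auto simp: closed_walk_def follow_tour_def hd_conv_nth[symmetric])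
  ultimately show ?thesis by (simp add: walk_def)
qed

lemma traverses_list_at_rev:
  assumes "traverses_list_at xs e j"
  shows "traverses_list_at (rev xs) e (length xs - 2 - j)"
proof -
  have j: "Suc j < length xs" "xs ! j \<noteq> xs ! Suc j" "{xs ! j, xs ! Suc j} = e"
    using assms by (auto simp: traverses_list_at_def)
  then have "rev xs ! (length xs - 2 - j) = xs ! Suc j" "rev xs ! Suc (length xs - 2 - j) = xs ! j"
    by (simp_all add: rev_nth Suc_diff_Suc numeral_2_eq_2)
  then show ?thesis using j unfolding traverses_list_at_def by (auto simp: insert_commute)
qed

lemma traversed_follow_tour:
  assumes "closed_walk r xs" "traverses_list_at xs e i"
  shows "traversed (follow_tour r xs) e" "first_traversal (follow_tour r xs) e \<le> i"
  using assms traverses_at_follow_tour[OF assms(1)]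
  by (auto simp: traversed_def intro: first_traversal_le)

lemma hit_times_tour_and_reverse:
  assumes W: "closed_walk r xs" and i: "traverses_list_at xs e i" and j: "traverses_list_at xs e j"
  shows "Suc (first_traversal (follow_tour r xs) e) + Suc (first_traversal (follow_tour r (rev xs)) e)
    \<le> Suc i + (length xs - 1 - j)"
proof -
  have "Suc j < length xs" using j by (simp add: traverses_list_at_def)
  then show ?thesis
    using traversed_follow_tour(2)[OF W i]
      traversed_follow_tour(2)[OF closed_walk_rev[OF W] traverses_list_at_rev[OF j]] by linarith
qed

lemma traverses_list_at_exists:
  assumes "e \<in> E" "e \<in> walk_edges xs"
  obtains i where "traverses_list_at xs e i"
proof -
  obtain i where i: "Suc i < length xs" "{xs ! i, xs ! Suc i} = e"
    using assms(2) unfolding walk_edges_conv_nth by blast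
  then have "xs ! i \<noteq> xs ! Suc i" using edge_endpoints_distinct assms(1) by blast
  then show ?thesis using i that by (auto simp: traverses_list_at_def)
qed

definition both_ways :: "'v list \<Rightarrow> (nat \<Rightarrow> 'v) pmf" where
  "both_ways W = map_pmf (\<lambda>b. follow_tour r (if b then W else rev W)) (pmf_of_set UNIV)"

lemma searcher_strategy_both_ways: "closed_walk r W \<Longrightarrow> searcher_strategy E r (both_ways W)"
  unfolding searcher_strategy_def both_ways_def using walk_follow_tour closed_walk_rev by auto

lemma searcher_guarantee_both_ways:
  assumes W: "closed_walk r W" and cover: "E \<subseteq> walk_edges W"
  shows "searcher_guarantee E (both_ways W) \<le> ennreal (real (length W) / 2)"
  unfolding searcher_guarantee_def
proof (rule SUP_least)
  fix e assume e: "e \<in> E"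
  obtain i where i: "traverses_list_at W e i" using traverses_list_at_exists e cover by blast
  define h where "h xs = Suc (first_traversal (follow_tour r xs) e)" for xs
  have "traversed (follow_tour r W) e" "traversed (follow_tour r (rev W)) e"
    using traversed_follow_tour(1) W i closed_walk_rev[OF W] traverses_list_at_rev[OF i] by blast+
  then have hit: "hit_time (follow_tour r W) e = of_nat (h W)"
    "hit_time (follow_tour r (rev W)) e = of_nat (h (rev W))"
    unfolding h_def by (simp_all only: hit_time_traversed)
  have "h W + h (rev W) \<le> length W"
    using hit_times_tour_and_reverse[OF W i i] i unfolding h_def by (simp add: traverses_list_at_def)
  then have "ennreal (real (h W + h (rev W)) / 2) \<le> ennreal (real (length W) / 2)"
    by (intro ennreal_leI) simp
  moreover have "(\<integral>\<^sup>+ w. hit_time w e \<partial>measure_pmf (both_ways W)) = ennreal (real (h W + h (rev W)) / 2)"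
    unfolding both_ways_def
    by (simp add: nn_integral_pmf_of_set UNIV_bool hit add.commute ennreal_of_nat_eq_real_of_nat
        ennreal_divide_numeral[symmetric] ennreal_plus)
  ultimately show "(\<integral>\<^sup>+ w. hit_time w e \<partial>measure_pmf (both_ways W)) \<le> ennreal (real (length W) / 2)"
    by simp
qed

lemma game_val_le_half_length:
  assumes "closed_walk r W" "E \<subseteq> walk_edges W"
  shows "game_val E r \<le> ennreal (real (length W) / 2)"
proof -
  have "game_val E r \<le> searcher_guarantee E (both_ways W)"
    unfolding game_val_def using searcher_strategy_both_ways[OF assms(1)] by (intro INF_lower) simp
  then show ?thesis using searcher_guarantee_both_ways[OF assms] by (rule order_trans)
qed

end

lemma mod_succ_swap_impossible:
  assumes k: "(3::nat) \<le> k" and ij: "i < k" "j < k" and eq: "i = Suc j mod k" "j = Suc i mod k"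
  shows False
proof (cases "Suc j < k")
  case True
  then have i: "i = Suc j" using eq(1) by simp
  show False
  proof (cases "Suc i < k")
    case True
    then have "Suc i mod k = Suc i" by simp
    then show False using eq(2) i by linarith
  next
    case False
    then have "Suc i = k" using ij(1) by linarith
    then have "j = 0" using eq(2) by simp
    then show False using \<open>Suc i = k\<close> i k by linarith
  qed
next
  case False
  then have "Suc j = k" using ij(2) by linarith
  then have "i = 0" using eq(1) by simp
  then have "Suc i mod k = 1" using k by simp
  then show False using eq(2) \<open>Suc j = k\<close> k by linarith
qed

lemma inj_on_cycle_edges:
  assumes cs: "distinct cs" "length cs \<ge> 3"
  shows "inj_on (\<lambda>i. {cs ! i, cs ! ((i + 1) mod length cs)}) {..<length cs}"
proof (rule inj_onI)
  fix i j assume "i \<in> {..<length cs}" "j \<in> {..<length cs}"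
    and eq: "{cs ! i, cs ! ((i + 1) mod length cs)} = {cs ! j, cs ! ((j + 1) mod length cs)}"
  then have ij: "i < length cs" "j < length cs" by auto
  have "0 < length cs" using cs(2) by linarith
  then have succ: "(a + 1) mod length cs < length cs" for a by simp
  have idx: "cs ! a = cs ! b \<longleftrightarrow> a = b" if "a < length cs" "b < length cs" for a b
    using nth_eq_iff_index_eq[OF cs(1) that] .
  from eq consider "cs ! i = cs ! j"
    | "cs ! i = cs ! ((j + 1) mod length cs)" "cs ! ((i + 1) mod length cs) = cs ! j"
    by (auto simp: doubleton_eq_iff)
  then show "i = j"
  proof cases
    case 1
    then show ?thesis using idx[OF ij] by simp
  next
    case 2
    have "i = Suc j mod length cs" using 2(1) idx[OF ij(1) succ[of j]] by simp
    moreover have "j = Suc i mod length cs" using 2(2) idx[OF succ[of i] ij(2)] by auto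
    ultimately show ?thesis using mod_succ_swap_impossible[OF cs(2) ij] by blast
  qed
qed

context connected_rooted_graph
begin

lemma cycle_closed_walk:
  assumes "\<not> acyclic_graph E"
  obtains c Z where "c \<in> V" "closed_walk c Z" "card (walk_edges Z) \<ge> 3"
    "length Z = card (walk_edges Z) + 1"
proof -
  obtain cs where cs: "length cs \<ge> 3" "distinct cs"
    "\<forall>i<length cs. {cs ! i, cs ! ((i + 1) mod length cs)} \<in> E"
    using assms unfolding acyclic_graph_def by blast
  define k where "k = length cs"
  define f where "f i = {cs ! i, cs ! ((i + 1) mod k)}" for i
  define Z where "Z = cs @ [cs ! 0]"
  have lengthZ: "length Z = Suc k" unfolding Z_def k_def by simp
  have Zi: "Z ! i = cs ! i" if "i < k" for i using that unfolding Z_def k_def by (simp add: nth_append)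
  have Zk: "Z ! k = cs ! 0" unfolding Z_def k_def by (simp add: nth_append)
  have Z_f: "{Z ! i, Z ! Suc i} = f i" if "i < k" for i
  proof (cases "Suc i < k")
    case True then show ?thesis using Zi that unfolding f_def by simp
  next
    case False
    then have "Suc i = k" using that by simp
    moreover have "(i + 1) mod k = 0" using \<open>Suc i = k\<close> by simp
    ultimately show ?thesis using Zi that Zk unfolding f_def by simp
  qed
  have "(\<lambda>i. {Z ! i, Z ! Suc i}) ` {..<k} = f ` {..<k}" by (rule image_cong) (auto simp: Z_f)
  moreover have "{i. Suc i < length Z} = {..<k}" using lengthZ by auto
  ultimately have "walk_edges Z = f ` {..<k}"
    unfolding walk_edges_conv_nth setcompr_eq_image by simp
  moreover have "inj_on f {..<k}" using inj_on_cycle_edges[OF cs(2,1)] unfolding f_def k_def .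
  ultimately have card: "card (walk_edges Z) = k" by (simp add: card_image)
  have fE: "f i \<in> E" if "i < k" for i using cs(3) that unfolding f_def k_def by simp
  then have edges: "walk_edges Z \<subseteq> E" using \<open>walk_edges Z = _\<close> by auto
  have "0 < k" using cs(1) unfolding k_def by linarith
  then have "cs ! 0 \<in> V" using fE[of 0] edges_subset_Pow unfolding f_def by auto
  moreover have "hd Z = cs ! 0" "last Z = cs ! 0"
    using \<open>0 < k\<close> unfolding Z_def k_def by (simp_all add: hd_conv_nth nth_append)
  then have "closed_walk (cs ! 0) Z" using edges unfolding closed_walk_def by (auto simp: Z_def)
  ultimately show ?thesis using that card cs(1) lengthZ unfolding k_def by simp
qed

text \<open>A cycle of length \<open>k \<ge> 3\<close> together with a detour for every other edge is a covering
  closed walk on \<open>2 |E| - k + 1\<close> vertices.\<close>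
lemma short_cover_walk_if_cyclic:
  assumes "\<not> acyclic_graph E"
  obtains W where "closed_walk r W" "E \<subseteq> walk_edges W" "length W + 2 \<le> 2 * card E"
proof -
  obtain c Z where Z: "c \<in> V" "closed_walk c Z" "card (walk_edges Z) \<ge> 3"
    "length Z = card (walk_edges Z) + 1"
    using cycle_closed_walk[OF assms] by blast
  obtain W0 where W0: "closed_walk c W0" "E \<subseteq> walk_edges W0"
    "length W0 \<le> length Z + 2 * card (E - walk_edges Z)"
    using closed_walk_extend_to_cover[OF Z(1,2)] by blast
  have ZE: "walk_edges Z \<subseteq> E" using Z(2) by (simp add: closed_walk_def)
  then have "card (E - walk_edges Z) = card E - card (walk_edges Z)" "card (walk_edges Z) \<le> card E"
    using finite_E by (simp_all add: card_Diff_subset finite_subset card_mono)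
  then have length: "length W0 + 2 \<le> 2 * card E" using W0(3) Z(3,4) by linarith
  have "walk_edges Z \<noteq> {}" using Z(3) by (metis card.empty not_numeral_le_zero)
  then have "E \<noteq> {}" using ZE by blast
  then obtain e where e: "e \<in> E" "r \<in> e" using root_on_edge by blast
  then have "e \<in> walk_edges W0" using W0(2) by blast
  then have "r \<in> set W0" using walk_edges_vertex e(2) by metis
  then obtain W where "closed_walk r W" "walk_edges W = walk_edges W0" "length W = length W0"
    using closed_walk_rotate[OF W0(1)] by blast
  then show ?thesis using that W0(2) length by simp
qed

lemma game_val_less_card_if_cyclic:
  assumes "\<not> acyclic_graph E"
  shows "game_val E r < of_nat (card E)"
proof -
  obtain W where W: "closed_walk r W" "E \<subseteq> walk_edges W" "length W + 2 \<le> 2 * card E"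
    using short_cover_walk_if_cyclic[OF assms] by blast
  have "game_val E r \<le> ennreal (real (length W) / 2)" by (rule game_val_le_half_length[OF W(1,2)])
  also have "\<dots> < ennreal (real (card E))" using W(3) by (intro ennreal_lessI) auto
  finally show ?thesis by (simp add: ennreal_of_nat_eq_real_of_nat)
qed

end

section \<open>Chinese postman tours on trees\<close>

lemma sum_le_by_pairing:
  fixes h :: "'a \<Rightarrow> nat"
  assumes "bij_betw g S S" "\<And>x. x \<in> S \<Longrightarrow> h x + h (g x) \<le> 2 * c"
  shows "(\<Sum>x\<in>S. h x) \<le> card S * c"
proof -
  have "2 * (\<Sum>x\<in>S. h x) = (\<Sum>x\<in>S. h x + h (g x))"
    using sum.reindex_bij_betw[OF assms(1), of h] by (simp add: sum.distrib)
  also have "\<dots> \<le> (\<Sum>x\<in>S. 2 * c)" using assms(2) by (rule sum_mono)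
  finally show ?thesis by simp
qed

context connected_rooted_graph
begin

definition postman_tours :: "'v list set" where
  "postman_tours = {xs. chinese_postman_tour E r xs}"

lemma postman_tours_nonempty_and_short:
  "postman_tours \<noteq> {}" "\<And>xs. xs \<in> postman_tours \<Longrightarrow> length xs \<le> 2 * card E + 1"
proof -
  obtain W where W: "closed_walk r W" "E \<subseteq> walk_edges W" "length W \<le> 2 * card E + 1"
    using closed_walk_extend_to_cover[OF root_in_V, of "[r]"] by (auto simp: closed_walk_def)
  then have cover: "closed_cover_walk E r W" using closed_cover_walk_iff by blast
  define n where "n = (LEAST n. \<exists>xs. closed_cover_walk E r xs \<and> length xs = n)"
  obtain xs where "closed_cover_walk E r xs" "length xs = n"
    unfolding n_def using LeastI[of "\<lambda>n. \<exists>xs. closed_cover_walk E r xs \<and> length xs = n"] cover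
    by blast
  moreover have "n \<le> length ys" if "closed_cover_walk E r ys" for ys
    unfolding n_def using that by (blast intro: Least_le)
  ultimately show "postman_tours \<noteq> {}"
    by (auto simp: postman_tours_def chinese_postman_tour_def)
  show "length xs \<le> 2 * card E + 1" if "xs \<in> postman_tours" for xs
    using that cover W(3) by (auto simp: postman_tours_def chinese_postman_tour_def)
qed

lemma postman_tour_cover:
  "xs \<in> postman_tours \<Longrightarrow> closed_walk r xs \<and> E \<subseteq> walk_edges xs"
  by (simp add: postman_tours_def chinese_postman_tour_def closed_cover_walk_iff)

lemma finite_postman_tours: "finite postman_tours"
proof (rule finite_subset)
  show "postman_tours \<subseteq> {xs. set xs \<subseteq> V \<and> length xs \<le> 2 * card E + 1}"
    using postman_tours_nonempty_and_short(2) postman_tour_cover closed_walk_set_subset[OF root_in_V]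
    by blast
  show "finite {xs. set xs \<subseteq> V \<and> length xs \<le> 2 * card E + 1}"
    by (rule finite_lists_length_le[OF finite_V])
qed

lemma postman_tour_rev: "xs \<in> postman_tours \<Longrightarrow> rev xs \<in> postman_tours"
  by (simp add: postman_tours_def chinese_postman_tour_def closed_cover_walk_iff
      closed_walk_rev walk_edges_rev)

lemma searcher_strategy_uniform_CPT: "searcher_strategy E r (uniform_CPT E r)"
proof -
  have "set_pmf (uniform_CPT E r) = follow_tour r ` postman_tours"
    unfolding uniform_CPT_def postman_tours_def[symmetric]
    using postman_tours_nonempty_and_short(1) finite_postman_tours by simp
  then show ?thesis
    unfolding searcher_strategy_def using postman_tour_cover walk_follow_tour by auto
qed

end

context rooted_tree
begin

text \<open>In a tree a closed walk from the root crosses each edge an even number of times.\<close>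
lemma closed_walk_traverses_twice:
  assumes W: "closed_walk r xs" and e: "e \<in> E" "e \<in> walk_edges xs"
  obtains i j where "i < j" "traverses_list_at xs e i" "traverses_list_at xs e j"
proof -
  define w where "w = follow_tour r xs"
  define S where "S = {s. s < length xs - 1 \<and> traverses_at w e s}"
  obtain i where i: "traverses_list_at xs e i" using traverses_list_at_exists[OF e] by blast
  have list_at: "traverses_list_at xs e s \<longleftrightarrow> traverses_at w e s" for s
    using traverses_at_follow_tour[OF W] unfolding w_def by simp
  have "Suc i < length xs" "traverses_at w e i" using i list_at by (auto simp: traverses_list_at_def)
  then have iS: "i \<in> S" unfolding S_def by simp
  have "w (length xs - 1) = r"
    using follow_tour_end(1)[OF W, of "length xs - 1"] unfolding w_def by simp
  then have "even (card S)"
    using odd_n_traversals_iff[OF walk_follow_tour[OF W] e(1), of "length xs - 1"] root_in_root_comp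
    unfolding S_def n_traversals_def w_def by simp
  then have "S \<noteq> {i}" by auto
  then obtain j where j: "j \<in> S" "j \<noteq> i" using iS by blast
  have "traverses_list_at xs e j" using j list_at unfolding S_def by simp
  then show ?thesis using that[of i j] that[of j i] i j(2) by (cases "i < j") auto
qed

lemma postman_tour_hit_times:
  assumes xs: "xs \<in> postman_tours" and e: "e \<in> E"
  shows "hit_time (follow_tour r xs) e = of_nat (Suc (first_traversal (follow_tour r xs) e))"
    "Suc (first_traversal (follow_tour r xs) e) + Suc (first_traversal (follow_tour r (rev xs)) e)
      \<le> 2 * card E"
proof -
  obtain i j where ij: "i < j" "traverses_list_at xs e i" "traverses_list_at xs e j"
    using closed_walk_traverses_twice e postman_tour_cover[OF xs] by blast
  then show "hit_time (follow_tour r xs) e = of_nat (Suc (first_traversal (follow_tour r xs) e))"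
    using traversed_follow_tour(1) postman_tour_cover[OF xs] hit_time_traversed by blast
  show "Suc (first_traversal (follow_tour r xs) e) + Suc (first_traversal (follow_tour r (rev xs)) e)
      \<le> 2 * card E"
    using ij hit_times_tour_and_reverse[OF _ ij(2,3)] postman_tour_cover[OF xs]
      postman_tours_nonempty_and_short(2)[OF xs] unfolding traverses_list_at_def by fastforce
qed

lemma searcher_guarantee_uniform_CPT_le: "searcher_guarantee E (uniform_CPT E r) \<le> of_nat (card E)"
  unfolding searcher_guarantee_def
proof (rule SUP_least)
  fix e assume e: "e \<in> E"
  define h where "h xs = Suc (first_traversal (follow_tour r xs) e)" for xs
  have hit: "hit_time (follow_tour r xs) e = of_nat (h xs)" if "xs \<in> postman_tours" for xs
    using postman_tour_hit_times(1)[OF that e] unfolding h_def .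
  have "h xs + h (rev xs) \<le> 2 * card E" if "xs \<in> postman_tours" for xs
    using postman_tour_hit_times(2)[OF that e] unfolding h_def .
  moreover have "bij_betw rev postman_tours postman_tours"
    by (rule bij_betw_byWitness[where f' = rev]) (auto simp: postman_tour_rev)
  ultimately have sum_h: "(\<Sum>xs\<in>postman_tours. h xs) \<le> card postman_tours * card E"
    by (rule sum_le_by_pairing[rotated])
  have card_pos: "card postman_tours > 0"
    using postman_tours_nonempty_and_short(1) finite_postman_tours by (simp add: card_gt_0_iff)
  have "(\<integral>\<^sup>+ w. hit_time w e \<partial>measure_pmf (uniform_CPT E r))
      = ennreal (real (\<Sum>xs\<in>postman_tours. h xs)) / ennreal (real (card postman_tours))"
    unfolding uniform_CPT_def postman_tours_def[symmetric]
    using postman_tours_nonempty_and_short(1) finite_postman_tours hit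
    by (simp add: nn_integral_pmf_of_set ennreal_of_nat_eq_real_of_nat)
  also have "\<dots> = ennreal (real (\<Sum>xs\<in>postman_tours. h xs) / real (card postman_tours))"
    using card_pos by (intro divide_ennreal) (auto intro: sum_nonneg)
  also have "\<dots> \<le> ennreal (real (card E))"
  proof (rule ennreal_leI)
    have "real (\<Sum>xs\<in>postman_tours. h xs) \<le> real (card postman_tours) * real (card E)"
      using sum_h by (simp only: of_nat_le_iff of_nat_mult[symmetric])
    then show "real (\<Sum>xs\<in>postman_tours. h xs) / real (card postman_tours) \<le> real (card E)"
      using card_pos by (simp add: divide_le_eq mult.commute)
  qed
  finally show "(\<integral>\<^sup>+ w. hit_time w e \<partial>measure_pmf (uniform_CPT E r)) \<le> of_nat (card E)"
    by (simp add: ennreal_of_nat_eq_real_of_nat)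
qed

end

section \<open>Existence of the equal branching density\<close>

context rooted_tree
begin

definition equal_ratios :: "('a set \<Rightarrow> real) \<Rightarrow> 'a \<Rightarrow> bool" where
  "equal_ratios \<epsilon> v \<longleftrightarrow> (\<forall>e1\<in>out v. \<forall>e2\<in>out v.
     (\<Sum>f\<in>subtree e1. \<epsilon> f) / real (card (subtree e1)) = (\<Sum>f\<in>subtree e2. \<epsilon> f) / real (card (subtree e2)))"

definition partial_ebd :: "'a set set \<Rightarrow> ('a set \<Rightarrow> real) \<Rightarrow> bool" where
  "partial_ebd S \<epsilon> \<longleftrightarrow> (\<forall>e. e \<notin> S \<longrightarrow> \<epsilon> e = 0) \<and> (\<forall>e. \<epsilon> e \<ge> 0)
     \<and> (\<forall>e\<in>S. \<not> leaf e \<longrightarrow> \<epsilon> e = 0) \<and> (\<Sum>e\<in>S. \<epsilon> e) = 1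
     \<and> (\<forall>v\<in>V. 2 \<le> card (out v) \<longrightarrow> out v \<subseteq> S \<longrightarrow> equal_ratios \<epsilon> v)"

lemma partial_ebdD:
  assumes "partial_ebd S \<epsilon>"
  shows "e \<notin> S \<Longrightarrow> \<epsilon> e = 0" "\<epsilon> e \<ge> 0" "e \<in> S \<Longrightarrow> \<not> leaf e \<Longrightarrow> \<epsilon> e = 0"
    "(\<Sum>e\<in>S. \<epsilon> e) = 1" "v \<in> V \<Longrightarrow> 2 \<le> card (out v) \<Longrightarrow> out v \<subseteq> S \<Longrightarrow> equal_ratios \<epsilon> v"
  using assms unfolding partial_ebd_def by auto

definition mixture :: "'a \<Rightarrow> ('a set \<Rightarrow> 'a set \<Rightarrow> real) \<Rightarrow> 'a set \<Rightarrow> real" where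
  "mixture u \<epsilon>s e =
     (\<Sum>f\<in>out u. real (card (subtree f)) / real (card (\<Union>(subtree ` out u))) * \<epsilon>s f e)"

context
  fixes u :: 'a and \<epsilon>s :: "'a set \<Rightarrow> 'a set \<Rightarrow> real"
  assumes out_nonempty: "out u \<noteq> {}" and partial: "\<And>f. f \<in> out u \<Longrightarrow> partial_ebd (subtree f) (\<epsilon>s f)"
begin

lemma mixture_facts:
  "\<And>f e. f \<in> out u \<Longrightarrow> e \<notin> subtree f \<Longrightarrow> \<epsilon>s f e = 0"
  "\<And>f e. f \<in> out u \<Longrightarrow> \<epsilon>s f e \<ge> 0"
  "\<And>f. f \<in> out u \<Longrightarrow> (\<Sum>e\<in>subtree f. \<epsilon>s f e) = 1"
  "real (card (\<Union>(subtree ` out u))) = (\<Sum>f\<in>out u. real (card (subtree f)))"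
  "real (card (\<Union>(subtree ` out u))) > 0"
proof -
  show "\<And>f e. f \<in> out u \<Longrightarrow> e \<notin> subtree f \<Longrightarrow> \<epsilon>s f e = 0"
    "\<And>f e. f \<in> out u \<Longrightarrow> \<epsilon>s f e \<ge> 0"
    "\<And>f. f \<in> out u \<Longrightarrow> (\<Sum>e\<in>subtree f. \<epsilon>s f e) = 1"
    using partial unfolding partial_ebd_def by auto
  have card: "card (\<Union>(subtree ` out u)) = (\<Sum>f\<in>out u. card (subtree f))"
    using finite_out_edges finite_subtree out_edges_iff sibling_subtrees_disjoint
    by (intro card_UN_disjoint) auto
  then show "real (card (\<Union>(subtree ` out u))) = (\<Sum>f\<in>out u. real (card (subtree f)))" by simp
  obtain f where "f \<in> out u" using out_nonempty by blast
  then have "card (subtree f) > 0" using card_subtree_pos out_edges_iff by blast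
  then show "real (card (\<Union>(subtree ` out u))) > 0"
    using card \<open>f \<in> out u\<close> finite_out_edges by (simp add: sum_pos2[where i = f])
qed

lemma mixture_mass_within:
  assumes f0: "f0 \<in> out u" and k: "k \<in> E" "subtree k \<subseteq> subtree f0"
  shows "(\<Sum>e\<in>subtree k. mixture u \<epsilon>s e)
    = real (card (subtree f0)) / real (card (\<Union>(subtree ` out u))) * (\<Sum>e\<in>subtree k. \<epsilon>s f0 e)"
proof -
  define c where "c f = real (card (subtree f)) / real (card (\<Union>(subtree ` out u)))" for f
  have "(\<Sum>e\<in>subtree k. mixture u \<epsilon>s e) = (\<Sum>f\<in>out u. c f * (\<Sum>e\<in>subtree k. \<epsilon>s f e))"
    unfolding mixture_def c_def by (simp add: sum.swap[of _ "subtree k"] sum_distrib_left)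
  also have "\<dots> = c f0 * (\<Sum>e\<in>subtree k. \<epsilon>s f0 e) + (\<Sum>f\<in>out u - {f0}. c f * (\<Sum>e\<in>subtree k. \<epsilon>s f e))"
    using f0 finite_out_edges by (simp add: sum.remove)
  also have "(\<Sum>f\<in>out u - {f0}. c f * (\<Sum>e\<in>subtree k. \<epsilon>s f e)) = 0"
  proof (intro sum.neutral ballI)
    fix f assume f: "f \<in> out u - {f0}"
    then have "\<forall>e\<in>subtree k. \<epsilon>s f e = 0"
      using sibling_subtrees_disjoint[of f u f0] f0 k(2) mixture_facts(1) by blast
    then show "c f * (\<Sum>e\<in>subtree k. \<epsilon>s f e) = 0" by simp
  qed
  finally show ?thesis unfolding c_def by simp
qed

lemma equal_ratios_mixture:
  assumes v: "v \<in> V" "2 \<le> card (out v)" "out v \<subseteq> \<Union>(subtree ` out u)"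
  shows "equal_ratios (mixture u \<epsilon>s) v"
proof (cases "v = u")
  case True
  have "(\<Sum>e\<in>subtree f. mixture u \<epsilon>s e) / real (card (subtree f))
      = 1 / real (card (\<Union>(subtree ` out u)))" if f: "f \<in> out u" for f
    using mixture_mass_within[OF f _ order_refl] mixture_facts(3)[OF f] f out_edges_iff
      card_subtree_pos[of f] by simp
  then show ?thesis unfolding equal_ratios_def True by simp
next
  case False
  obtain k0 where "k0 \<in> out v" using v(2) by fastforce
  then obtain f0 where f0: "f0 \<in> out u" "k0 \<in> subtree f0" using v(3) by blast
  have out_v: "out v \<subseteq> subtree f0"
    using out_edges_subset_subtree[OF \<open>k0 \<in> out v\<close> f0(2,1) False] .
  then have "equal_ratios (\<epsilon>s f0) v" using partial[OF f0(1)] v(1,2) unfolding partial_ebd_def by blast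
  moreover have "(\<Sum>e\<in>subtree k. mixture u \<epsilon>s e)
      = real (card (subtree f0)) / real (card (\<Union>(subtree ` out u))) * (\<Sum>e\<in>subtree k. \<epsilon>s f0 e)"
    if "k \<in> out v" for k
    using mixture_mass_within[OF f0(1)] subtree_trans out_v that out_edges_iff by blast
  ultimately show ?thesis unfolding equal_ratios_def
    by (metis (no_types, lifting) times_divide_eq_right)
qed

lemma partial_ebd_mixture: "partial_ebd (\<Union>(subtree ` out u)) (mixture u \<epsilon>s)"
proof -
  define D where "D = \<Union>(subtree ` out u)"
  have finite_D: "finite D"
    unfolding D_def using finite_out_edges finite_subtree out_edges_iff by blast
  have "mixture u \<epsilon>s e = 0" if "e \<notin> D" for e
    using that mixture_facts(1) unfolding mixture_def D_def by (auto intro: sum.neutral)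
  moreover have "mixture u \<epsilon>s e \<ge> 0" for e
    unfolding mixture_def using mixture_facts(2,5) by (auto intro!: sum_nonneg)
  moreover have "mixture u \<epsilon>s e = 0" if "\<not> leaf e" for e
  proof -
    have "\<epsilon>s f e = 0" if f: "f \<in> out u" for f
    proof (cases "e \<in> subtree f")
      case True
      then show ?thesis using partial[OF f] \<open>\<not> leaf e\<close> unfolding partial_ebd_def by blast
    qed (use mixture_facts(1) f in blast)
    then show ?thesis by (simp add: mixture_def)
  qed
  moreover have "(\<Sum>e\<in>D. mixture u \<epsilon>s e) = 1"
  proof -
    have "(\<Sum>e\<in>D. \<epsilon>s f e) = 1" if "f \<in> out u" for f
      using sum.mono_neutral_right[OF finite_D, of "subtree f" "\<epsilon>s f"] mixture_facts(1,3) that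
      unfolding D_def by auto
    have "(\<Sum>e\<in>D. mixture u \<epsilon>s e)
        = (\<Sum>f\<in>out u. \<Sum>e\<in>D. real (card (subtree f)) / real (card D) * \<epsilon>s f e)"
      unfolding mixture_def D_def[symmetric] by (rule sum.swap)
    also have "\<dots> = (\<Sum>f\<in>out u. real (card (subtree f)) / real (card D) * (\<Sum>e\<in>D. \<epsilon>s f e))"
      by (simp only: sum_distrib_left)
    also have "\<dots> = (\<Sum>f\<in>out u. real (card (subtree f))) / real (card D)"
      using \<open>\<And>f. f \<in> out u \<Longrightarrow> (\<Sum>e\<in>D. \<epsilon>s f e) = 1\<close> by (simp add: sum_divide_distrib)
    finally show ?thesis using mixture_facts(4,5) unfolding D_def by simp
  qed
  moreover have "equal_ratios (mixture u \<epsilon>s) v"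
    if "v \<in> V" "2 \<le> card (out v)" "out v \<subseteq> D" for v
    using equal_ratios_mixture that unfolding D_def by blast
  ultimately show ?thesis unfolding partial_ebd_def D_def by blast
qed

end

lemma branching_below_edge:
  assumes g: "g \<in> E" and v: "2 \<le> card (out v)" "out v \<subseteq> subtree g"
  shows "out v \<subseteq> \<Union>(subtree ` out (head g))"
proof -
  have "g \<notin> out v"
  proof
    assume go: "g \<in> out v"
    have "out v \<noteq> {g}"
    proof
      assume "out v = {g}"
      then show False using v(1) by simp
    qed
    then obtain k where k: "k \<in> out v" "k \<noteq> g" using go by blast
    then have "k \<in> subtree g" using v(2) by blast
    then have disj: "k \<inter> root_comp g = {}" using k(2) by (simp add: below_def)
    have "k \<in> E" "edge_tail k = v" "edge_tail g = v" using k(1) go out_edges_iff by auto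
    then have "v \<in> k \<inter> root_comp g" using edge_tail_in edge_tail_head(3)[OF g] by auto
    with disj show False by blast
  qed
  moreover have "out v \<subseteq> insert g (\<Union>(subtree ` out (head g)))"
    using v(2) subtree_decomp(1)[OF g] by simp
  ultimately show ?thesis by blast
qed

lemma partial_ebd_leaf:
  assumes "g \<in> E" "leaf g"
  shows "partial_ebd (subtree g) (\<lambda>e. if e = g then 1 else 0)"
  unfolding leaf_subtree[OF assms] partial_ebd_def
proof (intro conjI allI ballI impI)
  show "equal_ratios (\<lambda>e. if e = g then 1 else 0) v" if "2 \<le> card (out v)" "out v \<subseteq> {g}" for v
  proof -
    have "card (out v) \<le> card {g}" using that(2) by (intro card_mono) auto
    then show ?thesis using that(1) by simp
  qed
qed (use assms(2) in auto)

lemma partial_ebd_extend_to_subtree: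
  assumes g: "g \<in> E" "\<not> leaf g" and D: "partial_ebd (\<Union>(subtree ` out (head g))) \<epsilon>"
  shows "partial_ebd (subtree g) \<epsilon>"
proof -
  have decomp: "subtree g = insert g (\<Union>(subtree ` out (head g)))" "g \<notin> \<Union>(subtree ` out (head g))"
    using subtree_decomp[OF g(1)] by auto
  have finite: "finite (\<Union>(subtree ` out (head g)))" using finite_subtree[OF g(1)] decomp(1) by auto
  have g0: "\<epsilon> g = 0" using partial_ebdD(1)[OF D decomp(2)] .
  show ?thesis
    unfolding partial_ebd_def
  proof (intro conjI allI ballI impI)
    show "\<epsilon> e = 0" if "e \<notin> subtree g" for e
      using partial_ebdD(1)[OF D] that unfolding decomp(1) by simp
    show "\<epsilon> e \<ge> 0" for e by (rule partial_ebdD(2)[OF D])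
    show "\<epsilon> e = 0" if "e \<in> subtree g" "\<not> leaf e" for e
      using partial_ebdD(3)[OF D, of e] that g0 unfolding decomp(1) by auto
    show "(\<Sum>e\<in>subtree g. \<epsilon> e) = 1"
      using partial_ebdD(4)[OF D] finite decomp g0 by simp
    show "equal_ratios \<epsilon> v" if "v \<in> V" "2 \<le> card (out v)" "out v \<subseteq> subtree g" for v
      using partial_ebdD(5)[OF D] that branching_below_edge[OF g(1)] by blast
  qed
qed

text \<open>Bottom-up: the mixture of the densities of the child subtrees, weighted by their sizes.\<close>
lemma partial_ebd_subtree_exists: "g \<in> E \<Longrightarrow> \<exists>\<epsilon>. partial_ebd (subtree g) \<epsilon>"
proof (induction "card (subtree g)" arbitrary: g rule: less_induct)
  case less
  show ?case
  proof (cases "leaf g")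
    case True
    then show ?thesis using partial_ebd_leaf[OF less(2)] by blast
  next
    case False
    define u where "u = head g"
    have "\<forall>f\<in>out u. \<exists>\<epsilon>. partial_ebd (subtree f) \<epsilon>"
      using less(1)[OF card_child_subtree_less[OF less(2)]] out_edges_iff unfolding u_def by blast
    from bchoice[OF this] obtain \<epsilon>s where "\<forall>f\<in>out u. partial_ebd (subtree f) (\<epsilon>s f)" by blast
    then have "partial_ebd (\<Union>(subtree ` out u)) (mixture u \<epsilon>s)"
      using False by (intro partial_ebd_mixture) (auto simp: u_def leaf_edge_def)
    then show ?thesis using partial_ebd_extend_to_subtree[OF less(2) False] unfolding u_def by blast
  qed
qed

lemma equal_branching_density_exists:
  assumes "E \<noteq> {}"
  shows "\<exists>\<epsilon>. equal_branching_density V E r \<epsilon>"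
proof -
  have "\<forall>f\<in>out r. \<exists>\<epsilon>. partial_ebd (subtree f) \<epsilon>" using partial_ebd_subtree_exists out_edges_iff by blast
  from bchoice[OF this] obtain \<epsilon>s where "\<forall>f\<in>out r. partial_ebd (subtree f) (\<epsilon>s f)" by blast
  then have \<epsilon>s: "\<And>f. f \<in> out r \<Longrightarrow> partial_ebd (subtree f) (\<epsilon>s f)" by blast
  have "out r \<noteq> {}" using assms edge_in_root_subtree by blast
  then have P: "partial_ebd E (mixture r \<epsilon>s)"
    using partial_ebd_mixture[of r \<epsilon>s, OF _ \<epsilon>s] edges_decomp by simp
  have "equal_branching_density V E r (mixture r \<epsilon>s)"
    unfolding equal_branching_density_def
  proof (intro conjI ballI impI)
    show "hider_strategy E (mixture r \<epsilon>s)"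
      using partial_ebdD(2,4)[OF P] by (simp add: hider_strategy_def)
    show "mixture r \<epsilon>s e = 0" if "e \<in> E" "\<not> leaf e" for e using partial_ebdD(3)[OF P] that .
    fix v e1 e2 assume "v \<in> V" "2 \<le> card (out v)" "e1 \<in> out v" "e2 \<in> out v"
    moreover have "out v \<subseteq> E" by (auto simp: out_edges_def)
    ultimately show "(\<Sum>f\<in>subtree e1. mixture r \<epsilon>s f) / real (card (subtree e1))
        = (\<Sum>f\<in>subtree e2. mixture r \<epsilon>s f) / real (card (subtree e2))"
      using partial_ebdD(5)[OF P] unfolding equal_ratios_def by blast
  qed
  then show ?thesis by blast
qed

end

section \<open>Value of the game\<close>

lemma hider_guarantee_le_searcher_guarantee:
  assumes p: "hider_strategy E p" and \<sigma>: "searcher_strategy E r \<sigma>" and E: "finite E"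
  shows "hider_guarantee E r p \<le> searcher_guarantee E \<sigma>"
proof -
  let ?h = "hider_guarantee E r p" and ?s = "searcher_guarantee E \<sigma>"
  have pointwise: "?h \<le> (\<Sum>e\<in>E. ennreal (p e) * hit_time w e)" if "w \<in> set_pmf \<sigma>" for w
    using \<sigma> that unfolding hider_guarantee_def searcher_strategy_def by (intro INF_lower) auto
  have "?h = (\<integral>\<^sup>+ w. ?h \<partial>measure_pmf \<sigma>)" by (simp add: measure_pmf.emeasure_space_1)
  also have "\<dots> \<le> (\<integral>\<^sup>+ w. (\<Sum>e\<in>E. ennreal (p e) * hit_time w e) \<partial>measure_pmf \<sigma>)"
    by (rule nn_integral_mono_AE) (use pointwise in \<open>auto intro: AE_pmfI\<close>)
  also have "\<dots> = (\<Sum>e\<in>E. ennreal (p e) * \<integral>\<^sup>+ w. hit_time w e \<partial>measure_pmf \<sigma>)"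
    by (simp add: nn_integral_sum nn_integral_cmult)
  also have "\<dots> \<le> (\<Sum>e\<in>E. ennreal (p e) * ?s)"
    unfolding searcher_guarantee_def by (intro sum_mono mult_left_mono SUP_upper) auto
  also have "\<dots> = (\<Sum>e\<in>E. ennreal (p e)) * ?s" by (simp add: sum_distrib_right)
  also have "(\<Sum>e\<in>E. ennreal (p e)) = 1" using p by (simp add: hider_strategy_def)
  finally show ?thesis by simp
qed

lemma hider_guarantee_le_game_val:
  assumes "hider_strategy E p" "finite E"
  shows "hider_guarantee E r p \<le> game_val E r"
  unfolding game_val_def
  using hider_guarantee_le_searcher_guarantee[OF assms(1) _ assms(2)] by (auto intro: INF_greatest)

context rooted_tree
begin

lemma card_le_hider_guarantee:
  assumes "E \<noteq> {}" "equal_branching_density V E r \<epsilon>"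
  shows "of_nat (card E) \<le> hider_guarantee E r \<epsilon>"
  unfolding hider_guarantee_def
proof (rule INF_greatest)
  fix w assume "w \<in> {w. walk E r w}"
  then interpret walk_against_density V E r \<epsilon> w
    using assms(2) by unfold_locales auto
  show "of_nat (card E) \<le> (\<Sum>e\<in>E. ennreal (\<epsilon> e) * hit_time w e)"
    by (rule card_le_weighted_hit_time[OF assms(1)])
qed

lemma game_val_tree:
  assumes "E \<noteq> {}"
  shows "game_val E r = of_nat (card E)"
    and "equal_branching_density V E r \<epsilon> \<Longrightarrow> hider_guarantee E r \<epsilon> = of_nat (card E)"
    and "searcher_guarantee E (uniform_CPT E r) = of_nat (card E)"
proof -
  obtain \<epsilon>0 where \<epsilon>0: "equal_branching_density V E r \<epsilon>0"
    using equal_branching_density_exists[OF assms] by blast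
  have hider: "hider_guarantee E r \<epsilon> \<le> game_val E r" if "equal_branching_density V E r \<epsilon>" for \<epsilon>
    using that hider_guarantee_le_game_val[OF _ finite_E] by (simp add: equal_branching_density_def)
  have searcher: "game_val E r \<le> searcher_guarantee E (uniform_CPT E r)"
    "searcher_guarantee E (uniform_CPT E r) \<le> of_nat (card E)"
    unfolding game_val_def using searcher_strategy_uniform_CPT searcher_guarantee_uniform_CPT_le
    by (auto intro: INF_lower)
  show val: "game_val E r = of_nat (card E)"
    using card_le_hider_guarantee[OF assms \<epsilon>0] hider[OF \<epsilon>0] searcher by (auto intro: antisym)
  show "hider_guarantee E r \<epsilon> = of_nat (card E)" if "equal_branching_density V E r \<epsilon>"
    using card_le_hider_guarantee[OF assms that] hider[OF that] val by (auto intro: antisym)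
  show "searcher_guarantee E (uniform_CPT E r) = of_nat (card E)"
    using searcher val by (auto intro: antisym)
qed

end

theorem mainTheorem2:
  fixes V :: "'v set" and E :: "'v set set" and r :: 'v
  assumes "rooted_graph V E r" and "connected_graph V E" and "E \<noteq> {}"
  shows "game_val E r \<le> of_nat (card E) \<and>
         (game_val E r = of_nat (card E) \<longleftrightarrow> is_tree V E) \<and>
         (is_tree V E \<longrightarrow>
           (\<exists>\<epsilon>. equal_branching_density V E r \<epsilon>) \<and>
           (\<forall>\<epsilon>. equal_branching_density V E r \<epsilon> \<longrightarrow> hider_guarantee E r \<epsilon> = game_val E r) \<and>
           searcher_strategy E r (uniform_CPT E r) \<and>
           searcher_guarantee E (uniform_CPT E r) = game_val E r)"
proof -
  interpret connected_rooted_graph V E r using assms(1,2) by unfold_locales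
  show ?thesis
  proof (cases "acyclic_graph E")
    case True
    interpret rooted_tree V E r using True by unfold_locales
    show ?thesis
      using game_val_tree[OF assms(3)] equal_branching_density_exists[OF assms(3)]
        searcher_strategy_uniform_CPT True assms(2) by (simp add: is_tree_def)
  next
    case False
    then show ?thesis
      using game_val_less_card_if_cyclic[OF False] by (auto simp: is_tree_def)
  qed
qed

end
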